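(* Let $\mathcal{LS}_{\mathfrak{A}_2}\langle X\rangle$ be the free algebra over a field of characteristic $0$ in the variety of left-symmetric algebras satisfying $a(bc)+b(ac)+a(cb)+c(ab)+b(ca)+c(ba)=0$, and equip it with the commutator $[a,b]=ab-ba$. Then every polynomial identity of degree at most $4$ satisfied by $(\mathcal{LS}_{\mathfrak{A}_2}\langle X\rangle,[\cdot,\cdot])$ is a consequence of anticommutativity and the Jacobi identity.
   Context: A left-symmetric algebra is an algebra with $(a,b,c)=(b,a,c)$, where $(a,b,c)=(ab)c-a(bc)$. *)

theory Defs
  imports Main "HOL-Library.Poly_Mapping"
begin

datatype nmon = X nat | M nmon nmon

fun mdeg :: "nmon \<Rightarrow> nat" where
  "mdeg (X i) = 1"
| "mdeg (M a b) = mdeg a + mdeg b"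

type_synonym 'k napoly = "nmon \<Rightarrow>\<^sub>0 'k"

definition nsmult :: "'k::field \<Rightarrow> 'k napoly \<Rightarrow> 'k napoly" where
  "nsmult c p = Poly_Mapping.map (\<lambda>a. c * a) p"

definition nvar :: "nat \<Rightarrow> 'k::field napoly" where
  "nvar i = Poly_Mapping.single (X i) 1"

definition nmult :: "'k::field napoly \<Rightarrow> 'k napoly \<Rightarrow> 'k napoly" where
  "nmult p q = (\<Sum>s\<in>Poly_Mapping.keys p. \<Sum>t\<in>Poly_Mapping.keys q.
                  Poly_Mapping.single (M s t) (Poly_Mapping.lookup p s * Poly_Mapping.lookup q t))"

definition ncomm :: "'k::field napoly \<Rightarrow> 'k napoly \<Rightarrow> 'k napoly" where
  "ncomm p q = nmult p q - nmult q p"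

fun mon_eval :: "('k napoly \<Rightarrow> 'k napoly \<Rightarrow> 'k napoly) \<Rightarrow> (nat \<Rightarrow> 'k napoly) \<Rightarrow> nmon \<Rightarrow> 'k::field napoly" where
  "mon_eval \<mu> \<sigma> (X i) = \<sigma> i"
| "mon_eval \<mu> \<sigma> (M a b) = \<mu> (mon_eval \<mu> \<sigma> a) (mon_eval \<mu> \<sigma> b)"

definition poly_eval :: "('k napoly \<Rightarrow> 'k napoly \<Rightarrow> 'k napoly) \<Rightarrow> (nat \<Rightarrow> 'k napoly) \<Rightarrow> 'k napoly \<Rightarrow> 'k::field napoly" where
  "poly_eval \<mu> \<sigma> f = (\<Sum>t\<in>Poly_Mapping.keys f. nsmult (Poly_Mapping.lookup f t) (mon_eval \<mu> \<sigma> t))"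

abbreviation subst :: "(nat \<Rightarrow> 'k napoly) \<Rightarrow> 'k napoly \<Rightarrow> 'k::field napoly" where
  "subst \<sigma> f \<equiv> poly_eval nmult \<sigma> f"

text \<open>The T-ideal of k{X} generated by a set S of polynomials: the smallest
  two-sided ideal containing all substitution instances of elements of S.
  f is a consequence of the identities S iff f lies in this T-ideal.\<close>
inductive_set Tideal :: "'k::field napoly set \<Rightarrow> 'k napoly set" for S where
  gen: "s \<in> S \<Longrightarrow> subst \<sigma> s \<in> Tideal S"
| zero: "0 \<in> Tideal S"
| add: "p \<in> Tideal S \<Longrightarrow> q \<in> Tideal S \<Longrightarrow> p + q \<in> Tideal S"
| smult: "p \<in> Tideal S \<Longrightarrow> nsmult c p \<in> Tideal S"
| multl: "p \<in> Tideal S \<Longrightarrow> nmult q p \<in> Tideal S"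
| multr: "p \<in> Tideal S \<Longrightarrow> nmult p q \<in> Tideal S"

abbreviation x0 where "x0 \<equiv> nvar 0"
abbreviation x1 where "x1 \<equiv> nvar 1"
abbreviation x2 where "x2 \<equiv> nvar 2"

definition nassoc :: "'k::field napoly \<Rightarrow> 'k napoly \<Rightarrow> 'k napoly \<Rightarrow> 'k napoly" where
  "nassoc a b c = nmult (nmult a b) c - nmult a (nmult b c)"

definition LS_A2_ids :: "'k::field napoly set" where
  "LS_A2_ids = {nassoc x0 x1 x2 - nassoc x1 x0 x2,
     nmult x0 (nmult x1 x2) + nmult x1 (nmult x0 x2) + nmult x0 (nmult x2 x1)
     + nmult x2 (nmult x0 x1) + nmult x1 (nmult x2 x0) + nmult x2 (nmult x1 x0)}"

definition Lie_ids :: "'k::field napoly set" where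
  "Lie_ids = {nmult x0 x1 + nmult x1 x0,
     nmult (nmult x0 x1) x2 + nmult (nmult x1 x2) x0 + nmult (nmult x2 x0) x1}"

text \<open>The free LS_{A_2} algebra is k{X} / Tideal LS_A2_ids.  A polynomial f
  is an identity of (LS_{A_2}<X>, [.,.]) iff for all elements
  \<sigma> i + Tideal LS_A2_ids of the free algebra, evaluating f with the product
  read as the commutator gives 0, i.e. the evaluation lies in the T-ideal.\<close>
definition is_comm_identity_of_free_LSA2 :: "'k::field napoly \<Rightarrow> bool" where
  "is_comm_identity_of_free_LSA2 f \<longleftrightarrow>
     (\<forall>\<sigma>. poly_eval ncomm \<sigma> f \<in> Tideal LS_A2_ids)"

end

theory Submission
  imports Defs
begin

(* Write [t] for the evaluation of a monomial t with the product read as the commutator, and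
   L, I for the T-ideals generated by Lie_ids and by LS_A2_ids.  We construct an explicit
   linear map psi on k{X}, zero above degree 4, such that
     (i)  psi maps I into L, and
     (ii) psi [t] = 12 t modulo L for every monomial t of degree at most 4.
   For an identity f of degree at most 4 the evaluation [f] lies in I, hence
   12 f = psi [f] = 0 modulo L, and f lies in L because 12 is invertible.
   Since I is spanned by the instances of the two defining identities at monomials inside
   multiplicative contexts, and psi vanishes above degree 4, both (i) and (ii) reduce, up to
   renaming of variables, to finitely many equalities between integer combinations of
   monomials.  Each of them is checked by computation against an explicit certificate that
   writes the difference as a combination of instances of anticommutativity and of the
   Jacobi identity in contexts. *)

section \<open>Linear algebra in the free nonassociative algebra\<close>

lemma lookup_nsmult [simp]: "Poly_Mapping.lookup (nsmult c p) t = c * Poly_Mapping.lookup p t"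
  unfolding nsmult_def by (simp add: map.rep_eq when_def)

lemma nsmult_add_right: "nsmult c (p + q) = nsmult c p + nsmult c q"
  by (rule poly_mapping_eqI) (simp add: lookup_add algebra_simps)

lemma nsmult_add_left: "nsmult (a + b) p = nsmult a p + nsmult b p"
  by (rule poly_mapping_eqI) (simp add: lookup_add algebra_simps)

lemma nsmult_diff_right: "nsmult c (p - q) = nsmult c p - nsmult c q"
  by (rule poly_mapping_eqI) (simp add: lookup_minus algebra_simps)

lemma nsmult_zero_left [simp]: "nsmult 0 p = 0"
  by (rule poly_mapping_eqI) simp

lemma nsmult_zero_right [simp]: "nsmult c 0 = 0"
  by (rule poly_mapping_eqI) simp

lemma nsmult_one [simp]: "nsmult 1 p = p"
  by (rule poly_mapping_eqI) simp

lemma nsmult_nsmult [simp]: "nsmult a (nsmult b p) = nsmult (a * b) p"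
  by (rule poly_mapping_eqI) simp

lemma nsmult_minus_one: "nsmult (-1) p = - p"
  by (rule poly_mapping_eqI) simp

lemma nsmult_single [simp]: "nsmult c (Poly_Mapping.single t d) = Poly_Mapping.single t (c * d)"
  by (rule poly_mapping_eqI) (simp add: lookup_single when_def)

lemma nsmult_sum: "nsmult c (sum f A) = (\<Sum>x\<in>A. nsmult c (f x))"
  by (induction A rule: infinite_finite_induct) (simp_all add: nsmult_add_right)

definition nlinear :: "('k::field napoly \<Rightarrow> 'k napoly) \<Rightarrow> bool" where
  "nlinear \<Phi> \<longleftrightarrow> (\<forall>p q. \<Phi> (p + q) = \<Phi> p + \<Phi> q) \<and> (\<forall>c p. \<Phi> (nsmult c p) = nsmult c (\<Phi> p))"

lemma nlinear_zero: "nlinear \<Phi> \<Longrightarrow> \<Phi> 0 = 0"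
  unfolding nlinear_def by (metis nsmult_zero_left)

lemma nlinear_diff: "nlinear \<Phi> \<Longrightarrow> \<Phi> (p - q) = \<Phi> p - \<Phi> q"
  unfolding nlinear_def by (metis diff_conv_add_uminus nsmult_minus_one)

lemma nlinear_sum: "nlinear \<Phi> \<Longrightarrow> \<Phi> (sum f A) = (\<Sum>x\<in>A. \<Phi> (f x))"
  by (induction A rule: infinite_finite_induct) (simp_all add: nlinear_zero, simp add: nlinear_def)

lemma nlinear_nsmult: "nlinear (nsmult c)"
  by (simp add: nlinear_def nsmult_add_right mult.commute)

definition nsubspace :: "'k::field napoly set \<Rightarrow> bool" where
  "nsubspace H \<longleftrightarrow> 0 \<in> H \<and> (\<forall>p\<in>H. \<forall>q\<in>H. p + q \<in> H) \<and> (\<forall>c. \<forall>p\<in>H. nsmult c p \<in> H)"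

lemma nsubspace_sum: "nsubspace H \<Longrightarrow> (\<And>x. x \<in> A \<Longrightarrow> f x \<in> H) \<Longrightarrow> sum f A \<in> H"
  unfolding nsubspace_def by (induction A rule: infinite_finite_induct) simp_all

lemma nsubspace_Tideal: "nsubspace (Tideal S)"
  by (simp add: nsubspace_def Tideal.zero Tideal.add Tideal.smult)

definition lin_ext :: "(nmon \<Rightarrow> 'k napoly) \<Rightarrow> 'k napoly \<Rightarrow> 'k::field napoly" where
  "lin_ext g p = (\<Sum>t\<in>Poly_Mapping.keys p. nsmult (Poly_Mapping.lookup p t) (g t))"

lemma lin_ext_superset:
  assumes "finite A" "Poly_Mapping.keys p \<subseteq> A"
  shows "lin_ext g p = (\<Sum>t\<in>A. nsmult (Poly_Mapping.lookup p t) (g t))"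
  unfolding lin_ext_def
  by (rule sum.mono_neutral_left) (use assms in \<open>auto simp: in_keys_iff\<close>)

lemma nlinear_lin_ext: "nlinear (lin_ext g)"
proof -
  have "lin_ext g (p + q) = lin_ext g p + lin_ext g q" for p q
  proof -
    let ?A = "Poly_Mapping.keys p \<union> Poly_Mapping.keys q"
    have "lin_ext g (p + q) = (\<Sum>t\<in>?A. nsmult (Poly_Mapping.lookup (p + q) t) (g t))"
      by (rule lin_ext_superset) (auto simp: keys_add)
    also have "\<dots> = (\<Sum>t\<in>?A. nsmult (Poly_Mapping.lookup p t) (g t))
        + (\<Sum>t\<in>?A. nsmult (Poly_Mapping.lookup q t) (g t))"
      by (simp add: lookup_add nsmult_add_left sum.distrib)
    also have "\<dots> = lin_ext g p + lin_ext g q"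
      by (simp add: lin_ext_superset[symmetric])
    finally show ?thesis .
  qed
  moreover have "lin_ext g (nsmult c p) = nsmult c (lin_ext g p)" for c p
    by (subst lin_ext_superset[of "Poly_Mapping.keys p"]) (auto simp: in_keys_iff lin_ext_def nsmult_sum)
  ultimately show ?thesis
    by (simp add: nlinear_def)
qed

lemma lin_ext_single [simp]: "lin_ext g (Poly_Mapping.single t c) = nsmult c (g t)"
  by (subst lin_ext_superset[of "{t}"]) auto

lemma lin_ext_fun_add: "lin_ext (\<lambda>t. g t + h t) p = lin_ext g p + lin_ext h p"
  by (simp add: lin_ext_def nsmult_add_right sum.distrib)

lemma lin_ext_fun_diff: "lin_ext (\<lambda>t. g t - h t) p = lin_ext g p - lin_ext h p"
  by (simp add: lin_ext_def nsmult_diff_right sum_subtractf)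

lemma lin_ext_fun_nsmult: "lin_ext (\<lambda>t. nsmult c (g t)) p = nsmult c (lin_ext g p)"
  by (simp add: lin_ext_def nsmult_sum mult.commute)

lemma lin_ext_comp: "nlinear \<Phi> \<Longrightarrow> \<Phi> (lin_ext g p) = lin_ext (\<lambda>t. \<Phi> (g t)) p"
  unfolding lin_ext_def by (simp add: nlinear_sum) (simp add: nlinear_def)

lemma lin_ext_monomials: "lin_ext (\<lambda>t. Poly_Mapping.single t 1) p = p"
proof (rule poly_mapping_eqI)
  fix k
  have "Poly_Mapping.lookup (lin_ext (\<lambda>t. Poly_Mapping.single t 1) p) k
      = (\<Sum>t\<in>Poly_Mapping.keys p. if t = k then Poly_Mapping.lookup p t else 0)"
    unfolding lin_ext_def lookup_sum by (intro sum.cong) (auto simp: lookup_single when_def)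
  also have "\<dots> = Poly_Mapping.lookup p k"
    by (simp add: in_keys_iff)
  finally show "Poly_Mapping.lookup (lin_ext (\<lambda>t. Poly_Mapping.single t 1) p) k = Poly_Mapping.lookup p k" .
qed

lemma nlinear_eq_lin_ext: "nlinear \<Phi> \<Longrightarrow> \<Phi> p = lin_ext (\<lambda>t. \<Phi> (Poly_Mapping.single t 1)) p"
  by (metis lin_ext_comp lin_ext_monomials)

lemma nsubspace_lin_ext:
  "nsubspace H \<Longrightarrow> (\<And>t. t \<in> Poly_Mapping.keys p \<Longrightarrow> g t \<in> H) \<Longrightarrow> lin_ext g p \<in> H"
  unfolding lin_ext_def by (rule nsubspace_sum) (auto simp: nsubspace_def)

lemma nsubspace_nlinear_image:
  assumes "nsubspace H" "nlinear \<Phi>" "\<And>t. \<Phi> (Poly_Mapping.single t 1) \<in> H"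
  shows "\<Phi> p \<in> H"
  using assms by (simp add: nlinear_eq_lin_ext[of \<Phi> p] nsubspace_lin_ext)

lemma nmult_lin_ext: "nmult p q = lin_ext (\<lambda>s. lin_ext (\<lambda>t. Poly_Mapping.single (M s t) 1) q) p"
  unfolding nmult_def lin_ext_def by (simp add: nsmult_sum)

lemma nlinear_nmult_left: "nlinear (\<lambda>p. nmult p q)"
  unfolding nmult_lin_ext by (rule nlinear_lin_ext)

lemma nlinear_nmult_right: "nlinear (nmult p)"
  unfolding nmult_lin_ext nlinear_def
  by (simp add: nlinear_lin_ext[unfolded nlinear_def] lin_ext_fun_add lin_ext_fun_nsmult)

lemma nmult_add_left: "nmult (p + p') q = nmult p q + nmult p' q"
  and nmult_add_right: "nmult p (q + q') = nmult p q + nmult p q'"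
  and nmult_nsmult_left: "nmult (nsmult c p) q = nsmult c (nmult p q)"
  and nmult_nsmult_right: "nmult p (nsmult c q) = nsmult c (nmult p q)"
  using nlinear_nmult_left nlinear_nmult_right unfolding nlinear_def by blast+

lemma nmult_zero_left [simp]: "nmult 0 q = 0"
  and nmult_zero_right [simp]: "nmult p 0 = 0"
  by (simp_all add: nmult_def)

lemma nmult_single_single [simp]:
  "nmult (Poly_Mapping.single a c) (Poly_Mapping.single b d) = Poly_Mapping.single (M a b) (c * d)"
  by (simp add: nmult_lin_ext)

lemma poly_eval_lin_ext: "poly_eval \<mu> \<sigma> = lin_ext (mon_eval \<mu> \<sigma>)"
  by (simp add: fun_eq_iff poly_eval_def lin_ext_def)

lemma poly_eval_nmult:
  assumes "\<And>q. nlinear (\<lambda>p. \<mu> p q)" "\<And>p. nlinear (\<mu> p)"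
  shows "poly_eval \<mu> \<sigma> (nmult p q) = \<mu> (poly_eval \<mu> \<sigma> p) (poly_eval \<mu> \<sigma> q)"
proof -
  note eval = poly_eval_lin_ext[of \<mu> \<sigma>]
  have "poly_eval \<mu> \<sigma> (nmult p q)
      = lin_ext (\<lambda>s. lin_ext (\<lambda>t. \<mu> (mon_eval \<mu> \<sigma> s) (mon_eval \<mu> \<sigma> t)) q) p"
    unfolding eval nmult_lin_ext by (simp add: lin_ext_comp nlinear_lin_ext)
  also have "\<dots> = lin_ext (\<lambda>s. \<mu> (mon_eval \<mu> \<sigma> s) (lin_ext (mon_eval \<mu> \<sigma>) q)) p"
    by (simp add: lin_ext_comp[OF assms(2)])
  also have "\<dots> = \<mu> (poly_eval \<mu> \<sigma> p) (poly_eval \<mu> \<sigma> q)"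
    unfolding eval by (simp add: lin_ext_comp[OF assms(1)])
  finally show ?thesis .
qed

lemma subst_nmult: "subst \<sigma> (nmult p q) = nmult (subst \<sigma> p) (subst \<sigma> q)"
  by (rule poly_eval_nmult[OF nlinear_nmult_left nlinear_nmult_right])

lemma subst_add: "subst \<sigma> (p + q) = subst \<sigma> p + subst \<sigma> q"
  and subst_diff: "subst \<sigma> (p - q) = subst \<sigma> p - subst \<sigma> q"
proof -
  have "nlinear (subst \<sigma>)"
    by (simp add: poly_eval_lin_ext nlinear_lin_ext)
  then show "subst \<sigma> (p + q) = subst \<sigma> p + subst \<sigma> q" "subst \<sigma> (p - q) = subst \<sigma> p - subst \<sigma> q"
    by (simp_all add: nlinear_def nlinear_diff)
qed

lemma subst_nvar [simp]: "subst \<sigma> (nvar i) = \<sigma> i"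
  by (simp add: poly_eval_def nvar_def)

fun ren :: "(nat \<Rightarrow> nat) \<Rightarrow> nmon \<Rightarrow> nmon" where
  "ren r (X i) = X (r i)"
| "ren r (M a b) = M (ren r a) (ren r b)"

lemma ren_id [simp]: "ren id m = m"
  by (induction m) auto

lemma ren_ren [simp]: "ren r' (ren r m) = ren (r' \<circ> r) m"
  by (induction m) auto

lemma mdeg_ren [simp]: "mdeg (ren r m) = mdeg m"
  by (induction m) auto

lemma mdeg_pos: "0 < mdeg m"
  by (induction m) auto

type_synonym lcomb = "(nmon \<times> int) list"

definition lc_eval :: "(nat \<Rightarrow> nat) \<Rightarrow> lcomb \<Rightarrow> 'k::field napoly" where
  "lc_eval r xs = (\<Sum>(m, c)\<leftarrow>xs. Poly_Mapping.single (ren r m) (of_int c))"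

definition lc_ren :: "(nat \<Rightarrow> nat) \<Rightarrow> lcomb \<Rightarrow> lcomb" where
  "lc_ren r xs = map (\<lambda>(m, c). (ren r m, c)) xs"

definition lc_scale :: "int \<Rightarrow> lcomb \<Rightarrow> lcomb" where
  "lc_scale k xs = map (\<lambda>(m, c). (m, k * c)) xs"

definition lc_mult :: "lcomb \<Rightarrow> lcomb \<Rightarrow> lcomb" where
  "lc_mult xs ys = [(M a b, c * d). (a, c) \<leftarrow> xs, (b, d) \<leftarrow> ys]"

lemma lc_eval_Nil [simp]: "lc_eval r [] = 0"
  and lc_eval_Cons [simp]: "lc_eval r ((m, c) # xs) = Poly_Mapping.single (ren r m) (of_int c) + lc_eval r xs"
  and lc_eval_append [simp]: "lc_eval r (xs @ ys) = lc_eval r xs + lc_eval r ys"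
  by (simp_all add: lc_eval_def)

lemma lc_ren_Nil [simp]: "lc_ren r [] = []"
  and lc_ren_Cons [simp]: "lc_ren r ((m, c) # xs) = (ren r m, c) # lc_ren r xs"
  by (simp_all add: lc_ren_def)

lemma lc_eval_lc_ren [simp]: "lc_eval r' (lc_ren r xs) = lc_eval (r' \<circ> r) xs"
  by (induction xs) (auto simp: comp_def)

lemma lc_eval_lc_scale [simp]: "lc_eval r (lc_scale k xs) = nsmult (of_int k) (lc_eval r xs)"
  by (induction xs) (auto simp: lc_scale_def nsmult_add_right)

lemma lc_eval_lc_mult [simp]: "lc_eval r (lc_mult xs ys) = nmult (lc_eval r xs) (lc_eval r ys)"
proof -
  have row: "lc_eval r (map (\<lambda>(b, d). (M a b, c * d)) ys)
      = nmult (Poly_Mapping.single (ren r a) (of_int c)) (lc_eval r ys)" for a c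
    by (induction ys) (auto simp: nmult_add_right)
  show ?thesis
    by (induction xs) (auto simp: lc_mult_def row nmult_add_left lc_eval_def[of r "concat _"])
qed

lemma lc_ren_append [simp]: "lc_ren r (xs @ ys) = lc_ren r xs @ lc_ren r ys"
  and lc_ren_lc_scale: "lc_ren r (lc_scale k xs) = lc_scale k (lc_ren r xs)"
  and lc_ren_lc_mult: "lc_ren r (lc_mult xs ys) = lc_mult (lc_ren r xs) (lc_ren r ys)"
  by (simp_all add: lc_ren_def lc_scale_def lc_mult_def map_concat case_prod_beta comp_def)

lemma lc_mult_monomials:
  "(m, k) \<in> set (lc_mult xs ys) \<Longrightarrow> \<exists>a b c d. m = M a b \<and> (a, c) \<in> set xs \<and> (b, d) \<in> set ys"
  by (auto simp: lc_mult_def)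

fun lc_comm :: "nmon \<Rightarrow> lcomb" where
  "lc_comm (X i) = [(X i, 1)]"
| "lc_comm (M a b) = lc_mult (lc_comm a) (lc_comm b) @ lc_scale (-1) (lc_mult (lc_comm b) (lc_comm a))"

lemma mon_eval_ncomm_nvar: "mon_eval ncomm nvar t = lc_eval id (lc_comm t)"
  by (induction t) (simp_all add: nvar_def ncomm_def nsmult_minus_one)

lemma lc_comm_ren: "lc_comm (ren r t) = lc_ren r (lc_comm t)"
  by (induction t) (simp_all add: lc_ren_lc_mult lc_ren_lc_scale)

text \<open>A context is a list of one-sided multiplications by monomials, the head acting
  first; \<open>True\<close> stands for multiplication from the left.\<close>

type_synonym ctx = "(bool \<times> nmon) list"

fun ctx_apply :: "ctx \<Rightarrow> 'k napoly \<Rightarrow> 'k::field napoly" where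
  "ctx_apply [] p = p"
| "ctx_apply (lm # C) p = ctx_apply C
     (if fst lm then nmult (Poly_Mapping.single (snd lm) 1) p else nmult p (Poly_Mapping.single (snd lm) 1))"

fun lc_ctx :: "ctx \<Rightarrow> lcomb \<Rightarrow> lcomb" where
  "lc_ctx [] xs = xs"
| "lc_ctx (lm # C) xs = lc_ctx C (if fst lm then lc_mult [(snd lm, 1)] xs else lc_mult xs [(snd lm, 1)])"

definition ctx_ren :: "(nat \<Rightarrow> nat) \<Rightarrow> ctx \<Rightarrow> ctx" where
  "ctx_ren r C = map (\<lambda>(left, m). (left, ren r m)) C"

definition ctx_deg :: "ctx \<Rightarrow> nat" where
  "ctx_deg C = sum_list (map (mdeg \<circ> snd) C)"

lemma ctx_ren_id [simp]: "ctx_ren id C = C"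
  by (simp add: ctx_ren_def case_prod_beta)

lemma lc_eval_lc_ctx: "lc_eval r (lc_ctx C xs) = ctx_apply (ctx_ren r C) (lc_eval r xs)"
  by (induction C arbitrary: xs) (auto simp: ctx_ren_def case_prod_beta)

lemma lc_ren_lc_ctx: "lc_ren r (lc_ctx C xs) = lc_ctx (ctx_ren r C) (lc_ren r xs)"
  by (induction C arbitrary: xs) (auto simp: ctx_ren_def lc_ren_lc_mult case_prod_beta)

lemma nlinear_ctx_apply: "nlinear (ctx_apply C)"
  by (induction C)
    (auto simp: nlinear_def nmult_add_left nmult_add_right nmult_nsmult_left nmult_nsmult_right)

lemma Tideal_ctx_apply: "p \<in> Tideal S \<Longrightarrow> ctx_apply C p \<in> Tideal S"
  by (induction C arbitrary: p) (simp_all add: Tideal.multl Tideal.multr)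

lemma lc_ctx_mdeg:
  "(\<And>m c. (m, c) \<in> set xs \<Longrightarrow> mdeg m = d) \<Longrightarrow> (m, c) \<in> set (lc_ctx C xs) \<Longrightarrow> mdeg m = ctx_deg C + d"
proof (induction C arbitrary: xs d)
  case Nil
  then show ?case by (simp add: ctx_deg_def)
next
  case (Cons lm C)
  let ?ys = "if fst lm then lc_mult [(snd lm, 1)] xs else lc_mult xs [(snd lm, 1)]"
  have "mdeg m' = mdeg (snd lm) + d" if "(m', c') \<in> set ?ys" for m' c'
    using that Cons.prems(1) by (auto dest!: lc_mult_monomials split: if_splits)
  then show ?case
    using Cons.IH[of ?ys] Cons.prems(2) by (simp add: ctx_deg_def)
qed

fun lc_insert :: "nmon \<times> int \<Rightarrow> lcomb \<Rightarrow> lcomb" where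
  "lc_insert (m, c) [] = (if c = 0 then [] else [(m, c)])"
| "lc_insert (m, c) ((m', c') # xs) =
     (if m = m' then (if c + c' = 0 then xs else (m, c + c') # xs) else (m', c') # lc_insert (m, c) xs)"

fun lc_norm :: "lcomb \<Rightarrow> lcomb" where
  "lc_norm [] = []"
| "lc_norm (x # xs) = lc_insert x (lc_norm xs)"

definition lc_eq :: "lcomb \<Rightarrow> lcomb \<Rightarrow> bool" where
  "lc_eq xs ys \<longleftrightarrow> lc_norm (xs @ lc_scale (-1) ys) = []"

lemma lc_eval_lc_insert: "lc_eval r (lc_insert x xs) = lc_eval r (x # xs)"
proof (induction x xs rule: lc_insert.induct)
  case (2 m c m' c' xs)
  show ?case
  proof (cases "m = m'")
    case True
    then show ?thesis
      by (auto simp: single_add[symmetric] add.assoc[symmetric] simp flip: of_int_add)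
  next
    case False
    then show ?thesis using 2 by (simp add: add_ac)
  qed
qed simp

lemma lc_eval_lc_norm: "lc_eval r (lc_norm xs) = lc_eval r xs"
  by (induction xs) (simp_all add: lc_eval_lc_insert del: lc_eval_Cons, simp add: lc_eval_def)

lemma lc_eq_imp_eval_eq: "lc_eq xs ys \<Longrightarrow> lc_eval r xs = lc_eval r ys"
  using lc_eval_lc_norm[of r "xs @ lc_scale (-1) ys"]
  by (simp add: lc_eq_def nsmult_minus_one)

section \<open>Consequences of anticommutativity and the Jacobi identity\<close>

datatype lie_rel = Anticomm nmon nmon | Jacobi nmon nmon nmon

fun lie_rel_lc :: "lie_rel \<Rightarrow> lcomb" where
  "lie_rel_lc (Anticomm u v) = [(M u v, 1), (M v u, 1)]"
| "lie_rel_lc (Jacobi u v w) = [(M (M u v) w, 1), (M (M v w) u, 1), (M (M w u) v, 1)]"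

type_synonym lie_cert = "(int \<times> lie_rel \<times> ctx) list"

definition lie_cert_lc :: "lie_cert \<Rightarrow> lcomb" where
  "lie_cert_lc cs = concat (map (\<lambda>(k, g, C). lc_scale k (lc_ctx C (lie_rel_lc g))) cs)"

lemma lc_eval_lie_rel: "lc_eval r (lie_rel_lc g) \<in> Tideal Lie_ids"
proof (cases g)
  case (Anticomm u v)
  let ?\<sigma> = "\<lambda>i. [Poly_Mapping.single (ren r u) 1, Poly_Mapping.single (ren r v) 1] ! i"
  have "subst ?\<sigma> (nmult x0 x1 + nmult x1 x0) \<in> Tideal Lie_ids"
    by (rule Tideal.gen) (simp add: Lie_ids_def)
  then show ?thesis
    using Anticomm by (simp add: subst_add subst_nmult)
next
  case (Jacobi u v w)
  let ?\<sigma> = "\<lambda>i. [Poly_Mapping.single (ren r u) 1, Poly_Mapping.single (ren r v) 1,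
    Poly_Mapping.single (ren r w) 1] ! i"
  have "subst ?\<sigma> (nmult (nmult x0 x1) x2 + nmult (nmult x1 x2) x0 + nmult (nmult x2 x0) x1)
      \<in> Tideal Lie_ids"
    by (rule Tideal.gen) (simp add: Lie_ids_def)
  then show ?thesis
    using Jacobi by (simp add: subst_add subst_nmult add.assoc)
qed

lemma lc_eval_lie_cert: "lc_eval r (lie_cert_lc cs) \<in> Tideal Lie_ids"
proof (induction cs)
  case Nil
  then show ?case by (simp add: lie_cert_lc_def Tideal.zero)
next
  case (Cons c cs)
  obtain k g C where c: "c = (k, g, C)" by (cases c) auto
  have "ctx_apply (ctx_ren r C) (lc_eval r (lie_rel_lc g)) \<in> Tideal Lie_ids"
    by (intro Tideal_ctx_apply lc_eval_lie_rel)
  then show ?case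
    using Cons.IH by (auto simp: lie_cert_lc_def c lc_eval_lc_ctx intro: Tideal.add Tideal.smult)
qed

lemma lc_eq_lie_cert_Tideal: "lc_eq xs (lie_cert_lc cs) \<Longrightarrow> lc_eval r xs \<in> Tideal Lie_ids"
  using lc_eval_lie_cert by (metis lc_eq_imp_eval_eq)

datatype ls_rel = Left_symmetry | A2_identity

fun ls_rel_poly :: "ls_rel \<Rightarrow> 'k napoly \<Rightarrow> 'k napoly \<Rightarrow> 'k napoly \<Rightarrow> 'k::field napoly" where
  "ls_rel_poly Left_symmetry u v w = nassoc u v w - nassoc v u w"
| "ls_rel_poly A2_identity u v w = nmult u (nmult v w) + nmult v (nmult u w) + nmult u (nmult w v)
     + nmult w (nmult u v) + nmult v (nmult w u) + nmult w (nmult v u)"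

fun ls_rel_lc :: "ls_rel \<Rightarrow> nmon \<Rightarrow> nmon \<Rightarrow> nmon \<Rightarrow> lcomb" where
  "ls_rel_lc Left_symmetry u v w = [(M (M u v) w, 1), (M u (M v w), -1), (M (M v u) w, -1), (M v (M u w), 1)]"
| "ls_rel_lc A2_identity u v w = [(M u (M v w), 1), (M v (M u w), 1), (M u (M w v), 1),
     (M w (M u v), 1), (M v (M w u), 1), (M w (M v u), 1)]"

lemma LS_A2_ids_eq: "LS_A2_ids = {ls_rel_poly Left_symmetry x0 x1 x2, ls_rel_poly A2_identity x0 x1 x2}"
  by (simp add: LS_A2_ids_def)

lemma subst_ls_rel_poly: "subst \<sigma> (ls_rel_poly rel x0 x1 x2) = ls_rel_poly rel (\<sigma> 0) (\<sigma> 1) (\<sigma> 2)"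
  by (cases rel) (simp_all add: nassoc_def subst_add subst_diff subst_nmult)

lemma nlinear_ls_rel_poly:
  "nlinear (\<lambda>u. ls_rel_poly rel u v w)" "nlinear (\<lambda>v. ls_rel_poly rel u v w)"
  "nlinear (\<lambda>w. ls_rel_poly rel u v w)"
  by (cases rel; simp add: nlinear_def nassoc_def nmult_add_left nmult_add_right nmult_nsmult_left
      nmult_nsmult_right nsmult_add_right nsmult_diff_right algebra_simps)+

lemma ls_rel_poly_monomials:
  "ls_rel_poly rel (Poly_Mapping.single a 1) (Poly_Mapping.single b 1) (Poly_Mapping.single c 1)
    = lc_eval id (ls_rel_lc rel a b c)"
  by (cases rel) (simp_all add: nassoc_def single_uminus algebra_simps)

lemma ls_rel_lc_ren: "ls_rel_lc rel (ren r a) (ren r b) (ren r c) = lc_ren r (ls_rel_lc rel a b c)"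
  by (cases rel) simp_all

lemma ls_rel_lc_mdeg: "(m, k) \<in> set (ls_rel_lc rel a b c) \<Longrightarrow> mdeg m = mdeg a + mdeg b + mdeg c"
  by (cases rel) auto

text \<open>The values of \<open>psi_mon\<close> are combinations of left-normed monomials, i.e. of Lie
  monomials modulo the Lie T-ideal.  In degrees at most 4 the induced map is 12 times a left
  inverse of the commutator evaluation (see \<open>comm_defect\<close>).\<close>

fun psi_mon :: "nmon \<Rightarrow> lcomb" where
  "psi_mon (X a) = [(X a, 12)]"
| "psi_mon (M (X a) (X b)) = [(M (X a) (X b), 6)]"
| "psi_mon (M (X a) (M (X b) (X c))) = [(M (M (X a) (X b)) (X c), 4)]"
| "psi_mon (M (M (X a) (X b)) (X c)) = [(M (M (X a) (X b)) (X c), 4)]"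
| "psi_mon (M (X a) (M (X b) (M (X c) (X d)))) =
     [(M (M (M (X a) (X b)) (X c)) (X d), 3), (M (M (M (X a) (X b)) (X d)) (X c), -1),
      (M (M (M (X a) (X c)) (X b)) (X d), -1), (M (M (M (X a) (X c)) (X d)) (X b), -1)]"
| "psi_mon (M (X a) (M (M (X b) (X c)) (X d))) = [(M (M (M (X a) (X b)) (X c)) (X d), 4)]"
| "psi_mon (M (M (X a) (X b)) (M (X c) (X d))) =
     [(M (M (M (X a) (X b)) (X c)) (X d), 1), (M (M (M (X a) (X b)) (X d)) (X c), -1),
      (M (M (M (X a) (X c)) (X b)) (X d), 3), (M (M (M (X a) (X c)) (X d)) (X b), -1)]"
| "psi_mon (M (M (X a) (M (X b) (X c))) (X d)) =
     [(M (M (M (X a) (X b)) (X c)) (X d), 3), (M (M (M (X a) (X b)) (X d)) (X c), -1)]"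
| "psi_mon (M (M (M (X a) (X b)) (X c)) (X d)) =
     [(M (M (M (X a) (X b)) (X c)) (X d), 1), (M (M (M (X a) (X b)) (X d)) (X c), -1),
      (M (M (M (X a) (X c)) (X b)) (X d), 4)]"
| "psi_mon _ = []"

definition psi :: "'k::field napoly \<Rightarrow> 'k napoly" where
  "psi = lin_ext (\<lambda>t. lc_eval id (psi_mon t))"

definition lc_psi :: "lcomb \<Rightarrow> lcomb" where
  "lc_psi xs = concat (map (\<lambda>(m, c). lc_scale c (psi_mon m)) xs)"

lemma psi_mon_ren: "psi_mon (ren r m) = lc_ren r (psi_mon m)"
  by (induction m rule: psi_mon.induct) simp_all

lemma psi_mon_mdeg: "psi_mon m \<noteq> [] \<Longrightarrow> mdeg m \<le> 4"
  by (induction m rule: psi_mon.induct) simp_all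

lemma lc_psi_Nil [simp]: "lc_psi [] = []"
  and lc_psi_Cons [simp]: "lc_psi ((m, c) # xs) = lc_scale c (psi_mon m) @ lc_psi xs"
  by (simp_all add: lc_psi_def)

lemma lc_psi_lc_ren: "lc_psi (lc_ren r xs) = lc_ren r (lc_psi xs)"
  by (induction xs) (auto simp: psi_mon_ren lc_ren_lc_scale)

lemma nlinear_psi: "nlinear psi"
  unfolding psi_def by (rule nlinear_lin_ext)

lemma psi_lc_eval: "psi (lc_eval r xs) = lc_eval r (lc_psi xs)"
proof (induction xs)
  case Nil
  then show ?case by (simp add: nlinear_zero[OF nlinear_psi])
next
  case (Cons x xs)
  obtain m c where x: "x = (m, c)" by fastforce
  have "psi (Poly_Mapping.single (ren r m) (of_int c)) = lc_eval r (lc_scale c (psi_mon m))"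
    by (simp add: psi_def psi_mon_ren)
  with Cons.IH show ?case
    by (simp add: x nlinear_psi[unfolded nlinear_def])
qed

lemma lc_psi_high_mdeg: "(\<And>m c. (m, c) \<in> set xs \<Longrightarrow> 4 < mdeg m) \<Longrightarrow> lc_psi xs = []"
proof (induction xs)
  case (Cons x xs)
  obtain m c where x: "x = (m, c)" by fastforce
  have "psi_mon m = []"
    using Cons.prems[of m c] psi_mon_mdeg by (force simp: x)
  moreover have "lc_psi xs = []"
    using Cons.prems by (intro Cons.IH) (auto simp: x)
  ultimately show ?case by (simp add: x lc_scale_def)
qed simp

section \<open>Reduction to finitely many monomial shapes\<close>

fun leaves :: "nmon \<Rightarrow> nat list" where
  "leaves (X i) = [i]"
| "leaves (M a b) = leaves a @ leaves b"

fun skel :: "nat \<Rightarrow> nmon \<Rightarrow> nmon" where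
  "skel n (X i) = X n"
| "skel n (M a b) = M (skel n a) (skel (n + mdeg a) b)"

fun skels :: "nat \<Rightarrow> nmon list \<Rightarrow> nmon list" where
  "skels n [] = []"
| "skels n (m # ms) = skel n m # skels (n + mdeg m) ms"

lemma length_leaves [simp]: "length (leaves m) = mdeg m"
  by (induction m) auto

lemma length_skels [simp]: "length (skels n ms) = length ms"
  by (induction ms arbitrary: n) auto

lemma ren_skel: "(\<And>i. i < mdeg m \<Longrightarrow> r (n + i) = leaves m ! i) \<Longrightarrow> ren r (skel n m) = m"
proof (induction m arbitrary: n)
  case (M a b)
  have "ren r (skel n a) = a"
    using M.prems[of i for i] by (intro M.IH(1)) (auto simp: nth_append)
  moreover have "ren r (skel (n + mdeg a) b) = b"
    using M.prems[of "mdeg a + i" for i] by (intro M.IH(2)) (auto simp: nth_append add.assoc)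
  ultimately show ?case by simp
qed simp

lemma ren_skels:
  "(\<And>i. i < length (concat (map leaves ms)) \<Longrightarrow> r (n + i) = concat (map leaves ms) ! i)
    \<Longrightarrow> map (ren r) (skels n ms) = ms"
proof (induction ms arbitrary: n)
  case (Cons m ms)
  have "ren r (skel n m) = m"
    using Cons.prems[of i for i] by (intro ren_skel) (auto simp: nth_append)
  moreover have "map (ren r) (skels (n + mdeg m) ms) = ms"
    using Cons.prems[of "mdeg m + i" for i] by (intro Cons.IH) (auto simp: nth_append add.assoc)
  ultimately show ?case by simp
qed simp

lemma skels_renaming: "\<exists>r. map (ren r) (skels 0 ms) = ms"
  using ren_skels[of ms "\<lambda>i. concat (map leaves ms) ! i" 0] by auto

function shapes :: "nat \<Rightarrow> nat \<Rightarrow> nmon list" where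
  "shapes n d = (if d = 0 then [] else if d = 1 then [X n]
     else [M a b. i \<leftarrow> [1..<d], a \<leftarrow> shapes n i, b \<leftarrow> shapes (n + i) (d - i)])"
  by pat_completeness auto
termination by (relation "measure snd") auto

function forests :: "nat \<Rightarrow> nat \<Rightarrow> nmon list list" where
  "forests n d = (if d = 0 then [[]]
     else [m # ms. i \<leftarrow> [1..<d + 1], m \<leftarrow> shapes n i, ms \<leftarrow> forests (n + i) (d - i)])"
  by pat_completeness auto
termination by (relation "measure snd") auto

declare shapes.simps [simp del] forests.simps [simp del]

lemma shapes_1 [simp]: "shapes n (Suc 0) = [X n]"
  and forests_0 [simp]: "forests n 0 = [[]]"
  by (simp_all add: shapes.simps forests.simps)

lemma M_in_shapes:
  assumes "a \<in> set (shapes n i)" "b \<in> set (shapes (n + i) j)" "0 < i" "0 < j"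
  shows "M a b \<in> set (shapes n (i + j))"
proof -
  have "i \<in> set [1..<i + j]" "i + j \<noteq> 0" "i + j \<noteq> 1"
    using assms(3,4) by auto
  then show ?thesis
    using assms(1,2) by (subst shapes.simps) force
qed

lemma Cons_in_forests:
  assumes "m \<in> set (shapes n i)" "ms \<in> set (forests (n + i) d)" "0 < i"
  shows "m # ms \<in> set (forests n (i + d))"
proof -
  have "i \<in> set [1..<i + d + 1]" "i + d \<noteq> 0"
    using assms(3) by auto
  then show ?thesis
    using assms(1,2) by (subst forests.simps) force
qed

lemma skel_in_shapes: "skel n m \<in> set (shapes n (mdeg m))"
proof (induction m arbitrary: n)
  case (M a b)
  then show ?case by (simp add: M_in_shapes mdeg_pos)
qed simp

lemma skels_in_forests: "skels n ms \<in> set (forests n (sum_list (map mdeg ms)))"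
proof (induction ms arbitrary: n)
  case (Cons m ms)
  then show ?case by (simp add: Cons_in_forests skel_in_shapes mdeg_pos)
qed simp

definition comm_shapes :: "nmon list" where
  "comm_shapes = concat (map (shapes 0) [1..<5])"

definition ls_configs :: "(ls_rel \<times> ctx \<times> nmon \<times> nmon \<times> nmon) list" where
  "ls_configs = [(rel, zip sides cms, a, b, c).
     rel \<leftarrow> [Left_symmetry, A2_identity], d \<leftarrow> [0..<5], a # b # c # cms \<leftarrow> forests 0 d,
     sides \<leftarrow> List.n_lists (length cms) [True, False]]"

lemma comm_shapes_cover:
  assumes "mdeg t \<le> 4"
  obtains r t0 where "t0 \<in> set comm_shapes" "t = ren r t0"
proof -
  obtain r where "ren r (skel 0 t) = t"
    using skels_renaming[of "[t]"] by auto
  moreover have "skel 0 t \<in> set comm_shapes"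
    using skel_in_shapes[of 0 t] assms mdeg_pos[of t] by (auto simp: comm_shapes_def)
  ultimately show thesis
    using that by metis
qed

lemma ls_configs_cover:
  assumes "ctx_deg C + mdeg a + mdeg b + mdeg c \<le> 4"
  obtains r C0 a0 b0 c0 where "(rel, C0, a0, b0, c0) \<in> set ls_configs"
    and "C = ctx_ren r C0" "a = ren r a0" "b = ren r b0" "c = ren r c0"
proof -
  let ?ms = "a # b # c # map snd C"
  define cms where "cms = skels (mdeg a + mdeg b + mdeg c) (map snd C)"
  have skels: "skels 0 ?ms = skel 0 a # skel (mdeg a) b # skel (mdeg a + mdeg b) c # cms"
    by (simp add: cms_def)
  obtain r where r: "map (ren r) (skels 0 ?ms) = ?ms"
    using skels_renaming by blast
  have "skels 0 ?ms \<in> set (forests 0 (ctx_deg C + mdeg a + mdeg b + mdeg c))"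
    using skels_in_forests[of 0 ?ms] by (simp add: ctx_deg_def add_ac)
  moreover have "map fst C \<in> set (List.n_lists (length cms) [True, False])"
    by (auto simp: set_n_lists cms_def)
  ultimately have "(rel, zip (map fst C) cms, skel 0 a, skel (mdeg a) b, skel (mdeg a + mdeg b) c)
      \<in> set ls_configs"
    using assms unfolding ls_configs_def skels by (cases rel) force+
  moreover have "map (ren r) cms = map snd C"
    using r by (simp add: cms_def)
  then have "C = ctx_ren r (zip (map fst C) cms)"
    by (simp add: ctx_ren_def zip_map2[symmetric] zip_map_fst_snd)
  ultimately show thesis
    using that r by (simp add: skels)
qed

section \<open>Certificates\<close>

definition comm_defect :: "nmon \<Rightarrow> lcomb" where
  "comm_defect t = (t, 12) # lc_scale (-1) (lc_psi (lc_comm t))"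

definition psi_ls_instance :: "ls_rel \<Rightarrow> ctx \<Rightarrow> nmon \<Rightarrow> nmon \<Rightarrow> nmon \<Rightarrow> lcomb" where
  "psi_ls_instance rel C a b c = lc_psi (lc_ctx C (ls_rel_lc rel a b c))"

text \<open>The tables below express each \<open>comm_defect t\<close> and each \<open>psi_ls_instance\<close> of a
  configuration as a combination of Lie relations in contexts; a missing entry stands for
  the empty combination.\<close>

definition cert_of :: "('a \<times> lie_cert) list \<Rightarrow> 'a \<Rightarrow> lie_cert" where
  "cert_of tbl x = (case map_of tbl x of Some cs \<Rightarrow> cs | None \<Rightarrow> [])"

definition comm_certs :: "(nmon \<times> lie_cert) list" where
  "comm_certs = [
    (M (X 0) (X 1),
     [(6, Anticomm (X 0) (X 1), [])]),
    (M (X 0) (M (X 1) (X 2)),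
     [(8, Anticomm (X 0) (M (X 1) (X 2)), []),
      (4, Anticomm (X 1) (X 2), [(True, X 0)]),
      (-4, Anticomm (X 0) (M (X 2) (X 1)), []),
      (4, Anticomm (X 1) (M (X 0) (X 2)), []),
      (-4, Anticomm (X 0) (X 2), [(True, X 1)]),
      (4, Anticomm (X 1) (M (X 2) (X 0)), []),
      (-4, Jacobi (X 0) (X 1) (X 2), [])]),
    (M (M (X 0) (X 1)) (X 2),
     [(-4, Anticomm (X 0) (M (X 1) (X 2)), []),
      (4, Anticomm (X 1) (X 2), [(True, X 0)]),
      (-4, Anticomm (X 0) (M (X 2) (X 1)), []),
      (4, Anticomm (X 2) (M (X 0) (X 1)), []),
      (-4, Anticomm (X 0) (X 1), [(True, X 2)]),
      (4, Anticomm (X 2) (M (X 1) (X 0)), []),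
      (4, Jacobi (X 0) (X 1) (X 2), [])]),
    (M (X 0) (M (X 1) (M (X 2) (X 3))),
     [(11, Anticomm (X 1) (M (X 2) (X 3)), [(True, X 0)]),
      (1, Anticomm (X 2) (X 3), [(True, X 1), (True, X 0)]),
      (-1, Anticomm (X 1) (M (X 3) (X 2)), [(True, X 0)]),
      (3, Anticomm (X 0) (M (X 2) (M (X 1) (X 3))), []),
      (3, Anticomm (X 2) (M (X 1) (X 3)), [(True, X 0)]),
      (-6, Anticomm (X 1) (X 3), [(True, X 2), (True, X 0)]),
      (6, Anticomm (X 2) (M (X 3) (X 1)), [(True, X 0)]),
      (-3, Anticomm (X 0) (M (X 3) (M (X 1) (X 2))), []),
      (7, Anticomm (X 3) (M (X 1) (X 2)), [(True, X 0)]),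
      (-4, Anticomm (X 1) (X 2), [(True, X 3), (True, X 0)]),
      (4, Anticomm (X 3) (M (X 2) (X 1)), [(True, X 0)]),
      (1, Anticomm (X 0) (M (X 2) (X 3)), [(True, X 1)]),
      (-1, Anticomm (X 2) (X 3), [(True, X 0), (True, X 1)]),
      (1, Anticomm (X 0) (M (X 3) (X 2)), [(True, X 1)]),
      (-3, Anticomm (X 1) (M (X 2) (M (X 0) (X 3))), []),
      (5, Anticomm (X 2) (M (X 0) (X 3)), [(True, X 1)]),
      (-2, Anticomm (X 0) (X 3), [(True, X 2), (True, X 1)]),
      (2, Anticomm (X 2) (M (X 3) (X 0)), [(True, X 1)]),
      (3, Anticomm (X 1) (M (X 3) (M (X 0) (X 2))), []),
      (-3, Anticomm (X 3) (M (X 0) (X 2)), [(True, X 1)]),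
      (4, Anticomm (X 1) (M (X 0) (X 3)), [(True, X 2)]),
      (-4, Anticomm (X 0) (X 3), [(True, X 1), (True, X 2)]),
      (4, Anticomm (X 1) (M (X 3) (X 0)), [(True, X 2)]),
      (-4, Anticomm (X 1) (M (X 0) (X 2)), [(True, X 3)]),
      (4, Anticomm (X 0) (X 2), [(True, X 1), (True, X 3)]),
      (-4, Anticomm (X 1) (M (X 2) (X 0)), [(True, X 3)]),
      (3, Anticomm (X 0) (M (M (X 1) (X 2)) (X 3)), []),
      (-10, Jacobi (X 1) (X 2) (X 3), [(True, X 0)]),
      (-3, Anticomm (X 0) (M (M (X 1) (X 3)) (X 2)), []),
      (-4, Anticomm (X 0) (M (M (X 2) (X 1)) (X 3)), []),
      (-1, Anticomm (X 0) (M (M (X 2) (X 3)) (X 1)), []),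
      (4, Anticomm (X 0) (M (M (X 3) (X 1)) (X 2)), []),
      (1, Anticomm (X 0) (M (M (X 3) (X 2)) (X 1)), []),
      (5, Anticomm (X 1) (M (M (X 0) (X 2)) (X 3)), []),
      (-2, Jacobi (X 0) (X 2) (X 3), [(True, X 1)]),
      (-5, Anticomm (X 1) (M (M (X 0) (X 3)) (X 2)), []),
      (1, Anticomm (X 1) (M (M (X 2) (X 3)) (X 0)), []),
      (-1, Anticomm (X 1) (M (M (X 3) (X 2)) (X 0)), []),
      (4, Anticomm (X 2) (M (M (X 0) (X 1)) (X 3)), []),
      (-4, Jacobi (X 0) (X 1) (X 3), [(True, X 2)]),
      (-4, Anticomm (X 2) (M (M (X 0) (X 3)) (X 1)), []),
      (4, Anticomm (X 2) (M (M (X 1) (X 3)) (X 0)), []),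
      (-4, Anticomm (X 3) (M (M (X 0) (X 1)) (X 2)), []),
      (4, Jacobi (X 0) (X 1) (X 2), [(True, X 3)]),
      (4, Anticomm (X 3) (M (M (X 0) (X 2)) (X 1)), []),
      (-4, Anticomm (X 3) (M (M (X 1) (X 2)) (X 0)), []),
      (3, Anticomm (M (X 0) (X 2)) (M (X 1) (X 3)), []),
      (-3, Jacobi (X 0) (X 2) (M (X 1) (X 3)), []),
      (-3, Anticomm (M (X 0) (X 3)) (M (X 1) (X 2)), []),
      (3, Jacobi (X 0) (X 3) (M (X 1) (X 2)), []),
      (3, Jacobi (X 1) (X 2) (M (X 0) (X 3)), []),
      (-3, Jacobi (X 1) (X 3) (M (X 0) (X 2)), [])]),
    (M (X 0) (M (M (X 1) (X 2)) (X 3)),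
     [(-3, Anticomm (X 1) (M (X 2) (X 3)), [(True, X 0)]),
      (3, Anticomm (X 2) (X 3), [(True, X 1), (True, X 0)]),
      (-3, Anticomm (X 1) (M (X 3) (X 2)), [(True, X 0)]),
      (-4, Anticomm (X 2) (M (X 1) (X 3)), [(True, X 0)]),
      (4, Anticomm (X 1) (X 3), [(True, X 2), (True, X 0)]),
      (-4, Anticomm (X 2) (M (X 3) (X 1)), [(True, X 0)]),
      (-3, Anticomm (X 0) (M (X 3) (M (X 1) (X 2))), []),
      (4, Anticomm (X 3) (M (X 1) (X 2)), [(True, X 0)]),
      (-1, Anticomm (X 1) (X 2), [(True, X 3), (True, X 0)]),
      (1, Anticomm (X 3) (M (X 2) (X 1)), [(True, X 0)]),
      (1, Anticomm (X 0) (M (X 2) (X 3)), [(True, X 1)]),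
      (-1, Anticomm (X 2) (X 3), [(True, X 0), (True, X 1)]),
      (1, Anticomm (X 0) (M (X 3) (X 2)), [(True, X 1)]),
      (-3, Anticomm (X 1) (M (X 2) (M (X 0) (X 3))), []),
      (4, Anticomm (X 2) (M (X 0) (X 3)), [(True, X 1)]),
      (-1, Anticomm (X 0) (X 3), [(True, X 2), (True, X 1)]),
      (1, Anticomm (X 2) (M (X 3) (X 0)), [(True, X 1)]),
      (-1, Anticomm (X 0) (M (X 1) (X 3)), [(True, X 2)]),
      (1, Anticomm (X 1) (X 3), [(True, X 0), (True, X 2)]),
      (-1, Anticomm (X 0) (M (X 3) (X 1)), [(True, X 2)]),
      (-1, Anticomm (X 1) (M (X 0) (X 3)), [(True, X 2)]),
      (1, Anticomm (X 0) (X 3), [(True, X 1), (True, X 2)]),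
      (-1, Anticomm (X 1) (M (X 3) (X 0)), [(True, X 2)]),
      (-1, Anticomm (X 0) (M (X 1) (X 2)), [(True, X 3)]),
      (1, Anticomm (X 1) (X 2), [(True, X 0), (True, X 3)]),
      (-1, Anticomm (X 0) (M (X 2) (X 1)), [(True, X 3)]),
      (-5, Anticomm (X 1) (M (X 0) (X 2)), [(True, X 3)]),
      (5, Anticomm (X 0) (X 2), [(True, X 1), (True, X 3)]),
      (-5, Anticomm (X 1) (M (X 2) (X 0)), [(True, X 3)]),
      (1, Anticomm (X 0) (M (M (X 1) (X 2)) (X 3)), []),
      (7, Jacobi (X 1) (X 2) (X 3), [(True, X 0)]),
      (4, Anticomm (X 0) (M (M (X 1) (X 3)) (X 2)), []),
      (-1, Anticomm (X 0) (M (M (X 2) (X 1)) (X 3)), []),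
      (-4, Anticomm (X 0) (M (M (X 2) (X 3)) (X 1)), []),
      (-3, Anticomm (X 0) (M (M (X 3) (X 1)) (X 2)), []),
      (3, Anticomm (X 0) (M (M (X 3) (X 2)) (X 1)), []),
      (1, Anticomm (X 1) (M (M (X 0) (X 2)) (X 3)), []),
      (-1, Jacobi (X 0) (X 2) (X 3), [(True, X 1)]),
      (-4, Anticomm (X 1) (M (M (X 0) (X 3)) (X 2)), []),
      (-1, Anticomm (X 1) (M (M (X 3) (X 2)) (X 0)), []),
      (-1, Anticomm (X 2) (M (M (X 0) (X 1)) (X 3)), []),
      (1, Jacobi (X 0) (X 1) (X 3), [(True, X 2)]),
      (1, Anticomm (X 2) (M (M (X 0) (X 3)) (X 1)), []),
      (1, Anticomm (X 2) (M (M (X 3) (X 1)) (X 0)), []),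
      (-5, Anticomm (X 3) (M (M (X 0) (X 1)) (X 2)), []),
      (5, Jacobi (X 0) (X 1) (X 2), [(True, X 3)]),
      (5, Anticomm (X 3) (M (M (X 0) (X 2)) (X 1)), []),
      (-4, Anticomm (X 3) (M (M (X 1) (X 2)) (X 0)), []),
      (1, Anticomm (X 3) (M (M (X 2) (X 1)) (X 0)), []),
      (-3, Anticomm (M (X 0) (X 3)) (M (X 1) (X 2)), []),
      (3, Jacobi (X 0) (X 3) (M (X 1) (X 2)), []),
      (3, Jacobi (X 1) (X 2) (M (X 0) (X 3)), [])]),
    (M (M (X 0) (X 1)) (M (X 2) (X 3)),
     [(-12, Anticomm (X 0) (M (X 1) (M (X 2) (X 3))), []),
      (10, Anticomm (X 1) (M (X 2) (X 3)), [(True, X 0)]),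
      (2, Anticomm (X 2) (X 3), [(True, X 1), (True, X 0)]),
      (-2, Anticomm (X 1) (M (X 3) (X 2)), [(True, X 0)]),
      (6, Anticomm (X 0) (M (X 2) (M (X 1) (X 3))), []),
      (-1, Anticomm (X 2) (M (X 1) (X 3)), [(True, X 0)]),
      (-5, Anticomm (X 1) (X 3), [(True, X 2), (True, X 0)]),
      (5, Anticomm (X 2) (M (X 3) (X 1)), [(True, X 0)]),
      (-6, Anticomm (X 0) (M (X 3) (M (X 1) (X 2))), []),
      (9, Anticomm (X 3) (M (X 1) (X 2)), [(True, X 0)]),
      (-3, Anticomm (X 1) (X 2), [(True, X 3), (True, X 0)]),
      (3, Anticomm (X 3) (M (X 2) (X 1)), [(True, X 0)]),
      (2, Anticomm (X 0) (M (X 2) (X 3)), [(True, X 1)]),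
      (-2, Anticomm (X 2) (X 3), [(True, X 0), (True, X 1)]),
      (2, Anticomm (X 0) (M (X 3) (X 2)), [(True, X 1)]),
      (-6, Anticomm (X 1) (M (X 2) (M (X 0) (X 3))), []),
      (1, Anticomm (X 2) (M (X 0) (X 3)), [(True, X 1)]),
      (5, Anticomm (X 0) (X 3), [(True, X 2), (True, X 1)]),
      (-5, Anticomm (X 2) (M (X 3) (X 0)), [(True, X 1)]),
      (6, Anticomm (X 1) (M (X 3) (M (X 0) (X 2))), []),
      (-9, Anticomm (X 3) (M (X 0) (X 2)), [(True, X 1)]),
      (3, Anticomm (X 0) (X 2), [(True, X 3), (True, X 1)]),
      (-3, Anticomm (X 3) (M (X 2) (X 0)), [(True, X 1)]),
      (1, Anticomm (X 0) (M (X 1) (X 3)), [(True, X 2)]),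
      (-1, Anticomm (X 1) (X 3), [(True, X 0), (True, X 2)]),
      (1, Anticomm (X 0) (M (X 3) (X 1)), [(True, X 2)]),
      (3, Anticomm (X 1) (M (X 0) (X 3)), [(True, X 2)]),
      (-3, Anticomm (X 0) (X 3), [(True, X 1), (True, X 2)]),
      (3, Anticomm (X 1) (M (X 3) (X 0)), [(True, X 2)]),
      (2, Anticomm (X 3) (M (X 0) (X 1)), [(True, X 2)]),
      (-2, Anticomm (X 0) (X 1), [(True, X 3), (True, X 2)]),
      (2, Anticomm (X 3) (M (X 1) (X 0)), [(True, X 2)]),
      (-1, Anticomm (X 0) (M (X 1) (X 2)), [(True, X 3)]),
      (1, Anticomm (X 1) (X 2), [(True, X 0), (True, X 3)]),
      (-1, Anticomm (X 0) (M (X 2) (X 1)), [(True, X 3)]),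
      (-3, Anticomm (X 1) (M (X 0) (X 2)), [(True, X 3)]),
      (3, Anticomm (X 0) (X 2), [(True, X 1), (True, X 3)]),
      (-3, Anticomm (X 1) (M (X 2) (X 0)), [(True, X 3)]),
      (-2, Anticomm (X 2) (M (X 0) (X 1)), [(True, X 3)]),
      (2, Anticomm (X 0) (X 1), [(True, X 2), (True, X 3)]),
      (-2, Anticomm (X 2) (M (X 1) (X 0)), [(True, X 3)]),
      (-1, Anticomm (X 0) (M (M (X 1) (X 2)) (X 3)), []),
      (-8, Jacobi (X 1) (X 2) (X 3), [(True, X 0)]),
      (1, Anticomm (X 0) (M (M (X 1) (X 3)) (X 2)), []),
      (-3, Anticomm (X 0) (M (M (X 2) (X 1)) (X 3)), []),
      (-2, Anticomm (X 0) (M (M (X 2) (X 3)) (X 1)), []),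
      (3, Anticomm (X 0) (M (M (X 3) (X 1)) (X 2)), []),
      (2, Anticomm (X 0) (M (M (X 3) (X 2)) (X 1)), []),
      (1, Anticomm (X 1) (M (M (X 0) (X 2)) (X 3)), []),
      (8, Jacobi (X 0) (X 2) (X 3), [(True, X 1)]),
      (-1, Anticomm (X 1) (M (M (X 0) (X 3)) (X 2)), []),
      (3, Anticomm (X 1) (M (M (X 2) (X 0)) (X 3)), []),
      (-10, Anticomm (X 1) (M (M (X 2) (X 3)) (X 0)), []),
      (-3, Anticomm (X 1) (M (M (X 3) (X 0)) (X 2)), []),
      (-2, Anticomm (X 1) (M (M (X 3) (X 2)) (X 0)), []),
      (2, Anticomm (X 2) (M (M (X 0) (X 1)) (X 3)), []),
      (-4, Jacobi (X 0) (X 1) (X 3), [(True, X 2)]),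
      (-3, Anticomm (X 2) (M (M (X 0) (X 3)) (X 1)), []),
      (-2, Anticomm (X 2) (M (M (X 1) (X 0)) (X 3)), []),
      (3, Anticomm (X 2) (M (M (X 1) (X 3)) (X 0)), []),
      (1, Anticomm (X 2) (M (M (X 3) (X 0)) (X 1)), []),
      (-1, Anticomm (X 2) (M (M (X 3) (X 1)) (X 0)), []),
      (-2, Anticomm (X 3) (M (M (X 0) (X 1)) (X 2)), []),
      (4, Jacobi (X 0) (X 1) (X 2), [(True, X 3)]),
      (3, Anticomm (X 3) (M (M (X 0) (X 2)) (X 1)), []),
      (2, Anticomm (X 3) (M (M (X 1) (X 0)) (X 2)), []),
      (-3, Anticomm (X 3) (M (M (X 1) (X 2)) (X 0)), []),
      (-1, Anticomm (X 3) (M (M (X 2) (X 0)) (X 1)), []),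
      (1, Anticomm (X 3) (M (M (X 2) (X 1)) (X 0)), []),
      (12, Jacobi (X 0) (X 1) (M (X 2) (X 3)), []),
      (6, Anticomm (M (X 0) (X 2)) (M (X 1) (X 3)), []),
      (-6, Jacobi (X 0) (X 2) (M (X 1) (X 3)), []),
      (-6, Anticomm (M (X 0) (X 3)) (M (X 1) (X 2)), []),
      (6, Jacobi (X 0) (X 3) (M (X 1) (X 2)), []),
      (6, Jacobi (X 1) (X 2) (M (X 0) (X 3)), []),
      (-6, Jacobi (X 1) (X 3) (M (X 0) (X 2)), [])]),
    (M (M (X 0) (M (X 1) (X 2))) (X 3),
     [(-5, Anticomm (X 1) (M (X 2) (X 3)), [(True, X 0)]),
      (5, Anticomm (X 2) (X 3), [(True, X 1), (True, X 0)]),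
      (-5, Anticomm (X 1) (M (X 3) (X 2)), [(True, X 0)]),
      (3, Anticomm (X 0) (M (X 3) (M (X 1) (X 2))), []),
      (-4, Anticomm (X 3) (M (X 1) (X 2)), [(True, X 0)]),
      (1, Anticomm (X 1) (X 2), [(True, X 3), (True, X 0)]),
      (-1, Anticomm (X 3) (M (X 2) (X 1)), [(True, X 0)]),
      (-1, Anticomm (X 0) (M (X 2) (X 3)), [(True, X 1)]),
      (1, Anticomm (X 2) (X 3), [(True, X 0), (True, X 1)]),
      (-1, Anticomm (X 0) (M (X 3) (X 2)), [(True, X 1)]),
      (3, Anticomm (X 1) (M (X 2) (M (X 0) (X 3))), []),
      (-3, Anticomm (X 0) (X 3), [(True, X 2), (True, X 1)]),
      (3, Anticomm (X 2) (M (X 3) (X 0)), [(True, X 1)]),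
      (1, Anticomm (X 0) (M (X 1) (X 3)), [(True, X 2)]),
      (-1, Anticomm (X 1) (X 3), [(True, X 0), (True, X 2)]),
      (1, Anticomm (X 0) (M (X 3) (X 1)), [(True, X 2)]),
      (-3, Anticomm (X 1) (M (X 0) (X 3)), [(True, X 2)]),
      (3, Anticomm (X 0) (X 3), [(True, X 1), (True, X 2)]),
      (-3, Anticomm (X 1) (M (X 3) (X 0)), [(True, X 2)]),
      (12, Anticomm (X 3) (M (X 0) (M (X 1) (X 2))), []),
      (-11, Anticomm (X 0) (M (X 1) (X 2)), [(True, X 3)]),
      (-1, Anticomm (X 1) (X 2), [(True, X 0), (True, X 3)]),
      (1, Anticomm (X 0) (M (X 2) (X 1)), [(True, X 3)]),
      (-3, Anticomm (X 1) (M (X 0) (X 2)), [(True, X 3)]),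
      (3, Anticomm (X 0) (X 2), [(True, X 1), (True, X 3)]),
      (-3, Anticomm (X 1) (M (X 2) (X 0)), [(True, X 3)]),
      (-4, Anticomm (X 2) (M (X 0) (X 1)), [(True, X 3)]),
      (4, Anticomm (X 0) (X 1), [(True, X 2), (True, X 3)]),
      (-4, Anticomm (X 2) (M (X 1) (X 0)), [(True, X 3)]),
      (-1, Anticomm (X 0) (M (M (X 1) (X 2)) (X 3)), []),
      (5, Jacobi (X 1) (X 2) (X 3), [(True, X 0)]),
      (1, Anticomm (X 0) (M (M (X 2) (X 1)) (X 3)), []),
      (-5, Anticomm (X 0) (M (M (X 3) (X 1)) (X 2)), []),
      (5, Anticomm (X 0) (M (M (X 3) (X 2)) (X 1)), []),
      (-1, Anticomm (X 1) (M (M (X 0) (X 2)) (X 3)), []),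
      (1, Jacobi (X 0) (X 2) (X 3), [(True, X 1)]),
      (-4, Anticomm (X 1) (M (M (X 3) (X 0)) (X 2)), []),
      (1, Anticomm (X 1) (M (M (X 3) (X 2)) (X 0)), []),
      (1, Anticomm (X 2) (M (M (X 0) (X 1)) (X 3)), []),
      (-1, Jacobi (X 0) (X 1) (X 3), [(True, X 2)]),
      (3, Anticomm (X 2) (M (M (X 0) (X 3)) (X 1)), []),
      (4, Anticomm (X 2) (M (M (X 3) (X 0)) (X 1)), []),
      (-1, Anticomm (X 2) (M (M (X 3) (X 1)) (X 0)), []),
      (-3, Anticomm (X 3) (M (M (X 0) (X 1)) (X 2)), []),
      (7, Jacobi (X 0) (X 1) (X 2), [(True, X 3)]),
      (3, Anticomm (X 3) (M (M (X 0) (X 2)) (X 1)), []),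
      (4, Anticomm (X 3) (M (M (X 1) (X 0)) (X 2)), []),
      (4, Anticomm (X 3) (M (M (X 1) (X 2)) (X 0)), []),
      (-4, Anticomm (X 3) (M (M (X 2) (X 0)) (X 1)), []),
      (-1, Anticomm (X 3) (M (M (X 2) (X 1)) (X 0)), []),
      (3, Anticomm (M (X 0) (X 3)) (M (X 1) (X 2)), []),
      (-3, Jacobi (X 0) (X 3) (M (X 1) (X 2)), []),
      (-3, Jacobi (X 1) (X 2) (M (X 0) (X 3)), [])]),
    (M (M (M (X 0) (X 1)) (X 2)) (X 3),
     [(-4, Anticomm (X 1) (M (X 2) (X 3)), [(True, X 0)]),
      (4, Anticomm (X 2) (X 3), [(True, X 1), (True, X 0)]),
      (-4, Anticomm (X 1) (M (X 3) (X 2)), [(True, X 0)]),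
      (-3, Anticomm (X 0) (M (X 2) (M (X 1) (X 3))), []),
      (3, Anticomm (X 1) (X 3), [(True, X 2), (True, X 0)]),
      (-3, Anticomm (X 2) (M (X 3) (X 1)), [(True, X 0)]),
      (3, Anticomm (X 0) (M (X 3) (M (X 1) (X 2))), []),
      (-4, Anticomm (X 3) (M (X 1) (X 2)), [(True, X 0)]),
      (1, Anticomm (X 1) (X 2), [(True, X 3), (True, X 0)]),
      (-1, Anticomm (X 3) (M (X 2) (X 1)), [(True, X 0)]),
      (4, Anticomm (X 0) (M (X 2) (X 3)), [(True, X 1)]),
      (-4, Anticomm (X 2) (X 3), [(True, X 0), (True, X 1)]),
      (4, Anticomm (X 0) (M (X 3) (X 2)), [(True, X 1)]),
      (3, Anticomm (X 1) (M (X 2) (M (X 0) (X 3))), []),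
      (-3, Anticomm (X 0) (X 3), [(True, X 2), (True, X 1)]),
      (3, Anticomm (X 2) (M (X 3) (X 0)), [(True, X 1)]),
      (-3, Anticomm (X 1) (M (X 3) (M (X 0) (X 2))), []),
      (4, Anticomm (X 3) (M (X 0) (X 2)), [(True, X 1)]),
      (-1, Anticomm (X 0) (X 2), [(True, X 3), (True, X 1)]),
      (1, Anticomm (X 3) (M (X 2) (X 0)), [(True, X 1)]),
      (5, Anticomm (X 0) (M (X 1) (X 3)), [(True, X 2)]),
      (-5, Anticomm (X 1) (X 3), [(True, X 0), (True, X 2)]),
      (5, Anticomm (X 0) (M (X 3) (X 1)), [(True, X 2)]),
      (-3, Anticomm (X 1) (M (X 0) (X 3)), [(True, X 2)]),
      (3, Anticomm (X 0) (X 3), [(True, X 1), (True, X 2)]),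
      (-3, Anticomm (X 1) (M (X 3) (X 0)), [(True, X 2)]),
      (1, Anticomm (X 3) (M (X 0) (X 1)), [(True, X 2)]),
      (-1, Anticomm (X 0) (X 1), [(True, X 3), (True, X 2)]),
      (1, Anticomm (X 3) (M (X 1) (X 0)), [(True, X 2)]),
      (3, Anticomm (X 0) (M (X 1) (X 2)), [(True, X 3)]),
      (-3, Anticomm (X 1) (X 2), [(True, X 0), (True, X 3)]),
      (3, Anticomm (X 0) (M (X 2) (X 1)), [(True, X 3)]),
      (7, Anticomm (X 1) (M (X 0) (X 2)), [(True, X 3)]),
      (-7, Anticomm (X 0) (X 2), [(True, X 1), (True, X 3)]),
      (7, Anticomm (X 1) (M (X 2) (X 0)), [(True, X 3)]),
      (-1, Anticomm (X 2) (M (X 0) (X 1)), [(True, X 3)]),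
      (1, Anticomm (X 0) (X 1), [(True, X 2), (True, X 3)]),
      (-1, Anticomm (X 2) (M (X 1) (X 0)), [(True, X 3)]),
      (4, Jacobi (X 1) (X 2) (X 3), [(True, X 0)]),
      (1, Anticomm (X 0) (M (M (X 2) (X 1)) (X 3)), []),
      (-1, Anticomm (X 0) (M (M (X 3) (X 1)) (X 2)), []),
      (4, Anticomm (X 0) (M (M (X 3) (X 2)) (X 1)), []),
      (-4, Jacobi (X 0) (X 2) (X 3), [(True, X 1)]),
      (-1, Anticomm (X 1) (M (M (X 2) (X 0)) (X 3)), []),
      (1, Anticomm (X 1) (M (M (X 3) (X 0)) (X 2)), []),
      (-4, Anticomm (X 1) (M (M (X 3) (X 2)) (X 0)), []),
      (1, Anticomm (X 2) (M (M (X 0) (X 1)) (X 3)), []),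
      (-2, Jacobi (X 0) (X 1) (X 3), [(True, X 2)]),
      (3, Anticomm (X 2) (M (M (X 0) (X 3)) (X 1)), []),
      (-1, Anticomm (X 2) (M (M (X 1) (X 0)) (X 3)), []),
      (-3, Anticomm (X 2) (M (M (X 1) (X 3)) (X 0)), []),
      (5, Anticomm (X 2) (M (M (X 3) (X 0)) (X 1)), []),
      (-5, Anticomm (X 2) (M (M (X 3) (X 1)) (X 0)), []),
      (11, Anticomm (X 3) (M (M (X 0) (X 1)) (X 2)), []),
      (-10, Jacobi (X 0) (X 1) (X 2), [(True, X 3)]),
      (-7, Anticomm (X 3) (M (M (X 0) (X 2)) (X 1)), []),
      (1, Anticomm (X 3) (M (M (X 1) (X 0)) (X 2)), []),
      (7, Anticomm (X 3) (M (M (X 1) (X 2)) (X 0)), []),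
      (3, Anticomm (X 3) (M (M (X 2) (X 0)) (X 1)), []),
      (-3, Anticomm (X 3) (M (M (X 2) (X 1)) (X 0)), []),
      (-3, Anticomm (M (X 0) (X 2)) (M (X 1) (X 3)), []),
      (3, Jacobi (X 0) (X 2) (M (X 1) (X 3)), []),
      (3, Anticomm (M (X 0) (X 3)) (M (X 1) (X 2)), []),
      (-3, Jacobi (X 0) (X 3) (M (X 1) (X 2)), []),
      (-3, Jacobi (X 1) (X 2) (M (X 0) (X 3)), []),
      (3, Jacobi (X 1) (X 3) (M (X 0) (X 2)), [])])]"

definition ls_certs :: "((ls_rel \<times> ctx \<times> nmon \<times> nmon \<times> nmon) \<times> lie_cert) list" where
  "ls_certs = [
    ((Left_symmetry, [], M (X 0) (X 1), X 2, X 3),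
     [(-1, Anticomm (X 3) (M (X 0) (X 2)), [(True, X 1)]),
      (1, Anticomm (X 0) (X 2), [(True, X 3), (True, X 1)]),
      (-1, Anticomm (X 3) (M (X 2) (X 0)), [(True, X 1)]),
      (-1, Anticomm (X 1) (M (X 0) (X 2)), [(True, X 3)]),
      (1, Anticomm (X 0) (X 2), [(True, X 1), (True, X 3)]),
      (-1, Anticomm (X 1) (M (X 2) (X 0)), [(True, X 3)]),
      (1, Anticomm (X 1) (M (M (X 0) (X 2)) (X 3)), []),
      (1, Anticomm (X 1) (M (M (X 2) (X 0)) (X 3)), []),
      (1, Anticomm (X 3) (M (M (X 0) (X 2)) (X 1)), []),
      (1, Anticomm (X 3) (M (M (X 2) (X 0)) (X 1)), [])]),
    ((Left_symmetry, [], X 0, M (X 1) (X 2), X 3),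
     [(1, Anticomm (X 3) (M (X 0) (X 1)), [(True, X 2)]),
      (-1, Anticomm (X 0) (X 1), [(True, X 3), (True, X 2)]),
      (1, Anticomm (X 3) (M (X 1) (X 0)), [(True, X 2)]),
      (1, Anticomm (X 2) (M (X 0) (X 1)), [(True, X 3)]),
      (-1, Anticomm (X 0) (X 1), [(True, X 2), (True, X 3)]),
      (1, Anticomm (X 2) (M (X 1) (X 0)), [(True, X 3)]),
      (-1, Anticomm (X 2) (M (M (X 0) (X 1)) (X 3)), []),
      (-1, Anticomm (X 2) (M (M (X 1) (X 0)) (X 3)), []),
      (-1, Anticomm (X 3) (M (M (X 0) (X 1)) (X 2)), []),
      (-1, Anticomm (X 3) (M (M (X 1) (X 0)) (X 2)), [])]),
    ((Left_symmetry, [], X 0, X 1, M (X 2) (X 3)),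
     [(-4, Anticomm (X 1) (M (X 0) (X 2)), [(True, X 3)]),
      (4, Anticomm (X 0) (X 2), [(True, X 1), (True, X 3)]),
      (-4, Anticomm (X 1) (M (X 2) (X 0)), [(True, X 3)]),
      (-2, Anticomm (X 2) (M (X 0) (X 1)), [(True, X 3)]),
      (2, Anticomm (X 0) (X 1), [(True, X 2), (True, X 3)]),
      (-2, Anticomm (X 2) (M (X 1) (X 0)), [(True, X 3)]),
      (-2, Anticomm (X 3) (M (M (X 0) (X 1)) (X 2)), []),
      (4, Jacobi (X 0) (X 1) (X 2), [(True, X 3)]),
      (4, Anticomm (X 3) (M (M (X 0) (X 2)) (X 1)), []),
      (2, Anticomm (X 3) (M (M (X 1) (X 0)) (X 2)), []),
      (-4, Anticomm (X 3) (M (M (X 1) (X 2)) (X 0)), [])]),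
    ((Left_symmetry, [(False, X 3)], X 0, X 1, X 2),
     [(-4, Anticomm (X 1) (M (X 0) (X 2)), [(True, X 3)]),
      (4, Anticomm (X 0) (X 2), [(True, X 1), (True, X 3)]),
      (-4, Anticomm (X 1) (M (X 2) (X 0)), [(True, X 3)]),
      (-2, Anticomm (X 2) (M (X 0) (X 1)), [(True, X 3)]),
      (2, Anticomm (X 0) (X 1), [(True, X 2), (True, X 3)]),
      (-2, Anticomm (X 2) (M (X 1) (X 0)), [(True, X 3)]),
      (-2, Anticomm (X 3) (M (M (X 0) (X 1)) (X 2)), []),
      (4, Jacobi (X 0) (X 1) (X 2), [(True, X 3)]),
      (4, Anticomm (X 3) (M (M (X 0) (X 2)) (X 1)), []),
      (2, Anticomm (X 3) (M (M (X 1) (X 0)) (X 2)), []),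
      (-4, Anticomm (X 3) (M (M (X 1) (X 2)) (X 0)), [])]),
    ((A2_identity, [], X 0, X 1, X 2),
     [(4, Anticomm (X 0) (M (X 1) (X 2)), []),
      (-4, Anticomm (X 1) (X 2), [(True, X 0)]),
      (4, Anticomm (X 0) (M (X 2) (X 1)), []),
      (4, Anticomm (X 1) (M (X 0) (X 2)), []),
      (-4, Anticomm (X 0) (X 2), [(True, X 1)]),
      (4, Anticomm (X 1) (M (X 2) (X 0)), []),
      (4, Anticomm (X 2) (M (X 0) (X 1)), []),
      (-4, Anticomm (X 0) (X 1), [(True, X 2)]),
      (4, Anticomm (X 2) (M (X 1) (X 0)), [])]),
    ((A2_identity, [], M (X 0) (X 1), X 2, X 3),
     [(1, Anticomm (X 1) (M (X 2) (X 3)), [(True, X 0)]),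
      (-1, Anticomm (X 2) (X 3), [(True, X 1), (True, X 0)]),
      (1, Anticomm (X 1) (M (X 3) (X 2)), [(True, X 0)]),
      (-3, Anticomm (X 0) (M (X 2) (X 3)), [(True, X 1)]),
      (3, Anticomm (X 2) (X 3), [(True, X 0), (True, X 1)]),
      (-3, Anticomm (X 0) (M (X 3) (X 2)), [(True, X 1)]),
      (1, Anticomm (X 2) (M (X 0) (X 3)), [(True, X 1)]),
      (-1, Anticomm (X 0) (X 3), [(True, X 2), (True, X 1)]),
      (1, Anticomm (X 2) (M (X 3) (X 0)), [(True, X 1)]),
      (1, Anticomm (X 3) (M (X 0) (X 2)), [(True, X 1)]),
      (-1, Anticomm (X 0) (X 2), [(True, X 3), (True, X 1)]),
      (1, Anticomm (X 3) (M (X 2) (X 0)), [(True, X 1)]),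
      (-3, Anticomm (X 1) (M (X 0) (X 3)), [(True, X 2)]),
      (3, Anticomm (X 0) (X 3), [(True, X 1), (True, X 2)]),
      (-3, Anticomm (X 1) (M (X 3) (X 0)), [(True, X 2)]),
      (-3, Anticomm (X 1) (M (X 0) (X 2)), [(True, X 3)]),
      (3, Anticomm (X 0) (X 2), [(True, X 1), (True, X 3)]),
      (-3, Anticomm (X 1) (M (X 2) (X 0)), [(True, X 3)]),
      (-1, Anticomm (X 0) (M (M (X 2) (X 3)) (X 1)), []),
      (-1, Anticomm (X 0) (M (M (X 3) (X 2)) (X 1)), []),
      (-1, Anticomm (X 1) (M (M (X 0) (X 2)) (X 3)), []),
      (-1, Anticomm (X 1) (M (M (X 0) (X 3)) (X 2)), []),
      (-1, Anticomm (X 1) (M (M (X 2) (X 0)) (X 3)), []),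
      (3, Anticomm (X 1) (M (M (X 2) (X 3)) (X 0)), []),
      (-1, Anticomm (X 1) (M (M (X 3) (X 0)) (X 2)), []),
      (3, Anticomm (X 1) (M (M (X 3) (X 2)) (X 0)), []),
      (3, Anticomm (X 2) (M (M (X 0) (X 3)) (X 1)), []),
      (3, Anticomm (X 2) (M (M (X 3) (X 0)) (X 1)), []),
      (3, Anticomm (X 3) (M (M (X 0) (X 2)) (X 1)), []),
      (3, Anticomm (X 3) (M (M (X 2) (X 0)) (X 1)), [])]),
    ((A2_identity, [], X 0, M (X 1) (X 2), X 3),
     [(-3, Anticomm (X 2) (M (X 1) (X 3)), [(True, X 0)]),
      (3, Anticomm (X 1) (X 3), [(True, X 2), (True, X 0)]),
      (-3, Anticomm (X 2) (M (X 3) (X 1)), [(True, X 0)]),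
      (1, Anticomm (X 2) (M (X 0) (X 3)), [(True, X 1)]),
      (-1, Anticomm (X 0) (X 3), [(True, X 2), (True, X 1)]),
      (1, Anticomm (X 2) (M (X 3) (X 0)), [(True, X 1)]),
      (1, Anticomm (X 0) (M (X 1) (X 3)), [(True, X 2)]),
      (-1, Anticomm (X 1) (X 3), [(True, X 0), (True, X 2)]),
      (1, Anticomm (X 0) (M (X 3) (X 1)), [(True, X 2)]),
      (-3, Anticomm (X 1) (M (X 0) (X 3)), [(True, X 2)]),
      (3, Anticomm (X 0) (X 3), [(True, X 1), (True, X 2)]),
      (-3, Anticomm (X 1) (M (X 3) (X 0)), [(True, X 2)]),
      (1, Anticomm (X 3) (M (X 0) (X 1)), [(True, X 2)]),
      (-1, Anticomm (X 0) (X 1), [(True, X 3), (True, X 2)]),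
      (1, Anticomm (X 3) (M (X 1) (X 0)), [(True, X 2)]),
      (-3, Anticomm (X 2) (M (X 0) (X 1)), [(True, X 3)]),
      (3, Anticomm (X 0) (X 1), [(True, X 2), (True, X 3)]),
      (-3, Anticomm (X 2) (M (X 1) (X 0)), [(True, X 3)]),
      (3, Anticomm (X 0) (M (M (X 1) (X 3)) (X 2)), []),
      (3, Anticomm (X 0) (M (M (X 3) (X 1)) (X 2)), []),
      (-1, Anticomm (X 1) (M (M (X 0) (X 3)) (X 2)), []),
      (-1, Anticomm (X 1) (M (M (X 3) (X 0)) (X 2)), []),
      (-1, Anticomm (X 2) (M (M (X 0) (X 1)) (X 3)), []),
      (3, Anticomm (X 2) (M (M (X 0) (X 3)) (X 1)), []),
      (-1, Anticomm (X 2) (M (M (X 1) (X 0)) (X 3)), []),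
      (-1, Anticomm (X 2) (M (M (X 1) (X 3)) (X 0)), []),
      (3, Anticomm (X 2) (M (M (X 3) (X 0)) (X 1)), []),
      (-1, Anticomm (X 2) (M (M (X 3) (X 1)) (X 0)), []),
      (3, Anticomm (X 3) (M (M (X 0) (X 1)) (X 2)), []),
      (3, Anticomm (X 3) (M (M (X 1) (X 0)) (X 2)), [])]),
    ((A2_identity, [], X 0, X 1, M (X 2) (X 3)),
     [(-3, Anticomm (X 3) (M (X 1) (X 2)), [(True, X 0)]),
      (3, Anticomm (X 1) (X 2), [(True, X 3), (True, X 0)]),
      (-3, Anticomm (X 3) (M (X 2) (X 1)), [(True, X 0)]),
      (-3, Anticomm (X 3) (M (X 0) (X 2)), [(True, X 1)]),
      (3, Anticomm (X 0) (X 2), [(True, X 3), (True, X 1)]),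
      (-3, Anticomm (X 3) (M (X 2) (X 0)), [(True, X 1)]),
      (1, Anticomm (X 3) (M (X 0) (X 1)), [(True, X 2)]),
      (-1, Anticomm (X 0) (X 1), [(True, X 3), (True, X 2)]),
      (1, Anticomm (X 3) (M (X 1) (X 0)), [(True, X 2)]),
      (1, Anticomm (X 0) (M (X 1) (X 2)), [(True, X 3)]),
      (-1, Anticomm (X 1) (X 2), [(True, X 0), (True, X 3)]),
      (1, Anticomm (X 0) (M (X 2) (X 1)), [(True, X 3)]),
      (1, Anticomm (X 1) (M (X 0) (X 2)), [(True, X 3)]),
      (-1, Anticomm (X 0) (X 2), [(True, X 1), (True, X 3)]),
      (1, Anticomm (X 1) (M (X 2) (X 0)), [(True, X 3)]),
      (-3, Anticomm (X 2) (M (X 0) (X 1)), [(True, X 3)]),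
      (3, Anticomm (X 0) (X 1), [(True, X 2), (True, X 3)]),
      (-3, Anticomm (X 2) (M (X 1) (X 0)), [(True, X 3)]),
      (3, Anticomm (X 0) (M (M (X 1) (X 2)) (X 3)), []),
      (3, Anticomm (X 0) (M (M (X 2) (X 1)) (X 3)), []),
      (3, Anticomm (X 1) (M (M (X 0) (X 2)) (X 3)), []),
      (3, Anticomm (X 1) (M (M (X 2) (X 0)) (X 3)), []),
      (-1, Anticomm (X 2) (M (M (X 0) (X 1)) (X 3)), []),
      (-1, Anticomm (X 2) (M (M (X 1) (X 0)) (X 3)), []),
      (3, Anticomm (X 3) (M (M (X 0) (X 1)) (X 2)), []),
      (-1, Anticomm (X 3) (M (M (X 0) (X 2)) (X 1)), []),
      (3, Anticomm (X 3) (M (M (X 1) (X 0)) (X 2)), []),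
      (-1, Anticomm (X 3) (M (M (X 1) (X 2)) (X 0)), []),
      (-1, Anticomm (X 3) (M (M (X 2) (X 0)) (X 1)), []),
      (-1, Anticomm (X 3) (M (M (X 2) (X 1)) (X 0)), [])]),
    ((A2_identity, [(False, X 3)], X 0, X 1, X 2),
     [(1, Anticomm (X 3) (M (X 1) (X 2)), [(True, X 0)]),
      (-1, Anticomm (X 1) (X 2), [(True, X 3), (True, X 0)]),
      (1, Anticomm (X 3) (M (X 2) (X 1)), [(True, X 0)]),
      (1, Anticomm (X 3) (M (X 0) (X 2)), [(True, X 1)]),
      (-1, Anticomm (X 0) (X 2), [(True, X 3), (True, X 1)]),
      (1, Anticomm (X 3) (M (X 2) (X 0)), [(True, X 1)]),
      (1, Anticomm (X 3) (M (X 0) (X 1)), [(True, X 2)]),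
      (-1, Anticomm (X 0) (X 1), [(True, X 3), (True, X 2)]),
      (1, Anticomm (X 3) (M (X 1) (X 0)), [(True, X 2)]),
      (-3, Anticomm (X 0) (M (X 1) (X 2)), [(True, X 3)]),
      (3, Anticomm (X 1) (X 2), [(True, X 0), (True, X 3)]),
      (-3, Anticomm (X 0) (M (X 2) (X 1)), [(True, X 3)]),
      (-3, Anticomm (X 1) (M (X 0) (X 2)), [(True, X 3)]),
      (3, Anticomm (X 0) (X 2), [(True, X 1), (True, X 3)]),
      (-3, Anticomm (X 1) (M (X 2) (X 0)), [(True, X 3)]),
      (-3, Anticomm (X 2) (M (X 0) (X 1)), [(True, X 3)]),
      (3, Anticomm (X 0) (X 1), [(True, X 2), (True, X 3)]),
      (-3, Anticomm (X 2) (M (X 1) (X 0)), [(True, X 3)]),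
      (-1, Anticomm (X 0) (M (M (X 1) (X 2)) (X 3)), []),
      (-1, Anticomm (X 0) (M (M (X 2) (X 1)) (X 3)), []),
      (-1, Anticomm (X 1) (M (M (X 0) (X 2)) (X 3)), []),
      (-1, Anticomm (X 1) (M (M (X 2) (X 0)) (X 3)), []),
      (-1, Anticomm (X 2) (M (M (X 0) (X 1)) (X 3)), []),
      (-1, Anticomm (X 2) (M (M (X 1) (X 0)) (X 3)), []),
      (3, Anticomm (X 3) (M (M (X 0) (X 1)) (X 2)), []),
      (3, Anticomm (X 3) (M (M (X 0) (X 2)) (X 1)), []),
      (3, Anticomm (X 3) (M (M (X 1) (X 0)) (X 2)), []),
      (3, Anticomm (X 3) (M (M (X 1) (X 2)) (X 0)), []),
      (3, Anticomm (X 3) (M (M (X 2) (X 0)) (X 1)), []),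
      (3, Anticomm (X 3) (M (M (X 2) (X 1)) (X 0)), [])])]"

lemma comm_certs_valid:
  "\<forall>t\<in>set comm_shapes. lc_eq (comm_defect t) (lie_cert_lc (cert_of comm_certs t))"
  by code_simp

lemma ls_certs_valid:
  "\<forall>(rel, C, a, b, c)\<in>set ls_configs.
     lc_eq (psi_ls_instance rel C a b c) (lie_cert_lc (cert_of ls_certs (rel, C, a, b, c)))"
  by code_simp

lemma comm_defect_Tideal:
  assumes "mdeg t \<le> 4"
  shows "Poly_Mapping.single t 12 - psi (mon_eval ncomm nvar t) \<in> Tideal Lie_ids"
proof -
  obtain r t0 where "t0 \<in> set comm_shapes" and t: "t = ren r t0"
    using assms by (rule comm_shapes_cover)
  then have "lc_eval r (comm_defect t0) \<in> Tideal Lie_ids"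
    using comm_certs_valid lc_eq_lie_cert_Tideal by blast
  then show ?thesis
    by (simp add: t comm_defect_def mon_eval_ncomm_nvar lc_comm_ren psi_lc_eval nsmult_minus_one)
qed

lemma psi_ls_instance_Tideal:
  "psi (ctx_apply C (ls_rel_poly rel (Poly_Mapping.single a 1) (Poly_Mapping.single b 1)
    (Poly_Mapping.single c 1))) \<in> Tideal Lie_ids"
proof -
  have psi_eq: "psi (ctx_apply C (ls_rel_poly rel (Poly_Mapping.single a 1) (Poly_Mapping.single b 1)
      (Poly_Mapping.single c 1))) = lc_eval id (psi_ls_instance rel C a b c)"
    by (metis ls_rel_poly_monomials psi_ls_instance_def psi_lc_eval lc_eval_lc_ctx ctx_ren_id)
  show ?thesis
  proof (cases "ctx_deg C + mdeg a + mdeg b + mdeg c \<le> 4")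
    case True
    then obtain r C0 a0 b0 c0 where "(rel, C0, a0, b0, c0) \<in> set ls_configs"
      and inst: "C = ctx_ren r C0" "a = ren r a0" "b = ren r b0" "c = ren r c0"
      by (rule ls_configs_cover)
    then have "lc_eval r (psi_ls_instance rel C0 a0 b0 c0) \<in> Tideal Lie_ids"
      using ls_certs_valid lc_eq_lie_cert_Tideal by fast
    moreover have "psi_ls_instance rel C a b c = lc_ren r (psi_ls_instance rel C0 a0 b0 c0)"
      by (simp add: inst psi_ls_instance_def lc_psi_lc_ren ls_rel_lc_ren flip: lc_ren_lc_ctx)
    ultimately show ?thesis
      by (simp add: psi_eq)
  next
    case False
    have "mdeg m = ctx_deg C + (mdeg a + mdeg b + mdeg c)"
      if "(m, k) \<in> set (lc_ctx C (ls_rel_lc rel a b c))" for m k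
      using that by (rule lc_ctx_mdeg[rotated]) (rule ls_rel_lc_mdeg)
    then have "psi_ls_instance rel C a b c = []"
      using False unfolding psi_ls_instance_def by (intro lc_psi_high_mdeg) fastforce
    then show ?thesis
      by (simp add: psi_eq Tideal.zero)
  qed
qed

text \<open>The largest two-sided ideal whose image under \<open>psi\<close> lies in the Lie T-ideal.\<close>

definition psi_ker :: "'k::field napoly set" where
  "psi_ker = {p. \<forall>C. psi (ctx_apply C p) \<in> Tideal Lie_ids}"

lemma nsubspace_psi_ker: "nsubspace (psi_ker :: 'k::field napoly set)"
proof -
  have lin: "nlinear (\<lambda>p :: 'k napoly. psi (ctx_apply C p))" for C
    by (simp add: nlinear_def nlinear_psi[unfolded nlinear_def] nlinear_ctx_apply[unfolded nlinear_def])
  show ?thesis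
    unfolding nsubspace_def psi_ker_def
    using nlinear_zero[OF lin] lin[unfolded nlinear_def]
    by (simp add: Tideal.zero Tideal.add Tideal.smult)
qed

lemma psi_ker_nmult:
  assumes "p \<in> psi_ker"
  shows "nmult q p \<in> psi_ker" "nmult p q \<in> psi_ker"
proof -
  have hyp: "psi (ctx_apply C p) \<in> Tideal Lie_ids" for C
    using assms by (simp add: psi_ker_def)
  have left: "nmult (Poly_Mapping.single t 1) p \<in> psi_ker"
    and right: "nmult p (Poly_Mapping.single t 1) \<in> psi_ker" for t
    unfolding psi_ker_def using hyp[of "(True, t) # C" for C] hyp[of "(False, t) # C" for C] by simp_all
  show "nmult q p \<in> psi_ker"
    by (rule nsubspace_nlinear_image[OF nsubspace_psi_ker nlinear_nmult_left]) (rule left)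
  show "nmult p q \<in> psi_ker"
    by (rule nsubspace_nlinear_image[OF nsubspace_psi_ker nlinear_nmult_right]) (rule right)
qed

lemma ls_rel_poly_psi_ker: "ls_rel_poly rel u v w \<in> psi_ker"
proof (rule nsubspace_nlinear_image[OF nsubspace_psi_ker nlinear_ls_rel_poly(1)])
  fix a
  show "ls_rel_poly rel (Poly_Mapping.single a 1) v w \<in> psi_ker"
  proof (rule nsubspace_nlinear_image[OF nsubspace_psi_ker nlinear_ls_rel_poly(2)])
    fix b
    show "ls_rel_poly rel (Poly_Mapping.single a 1) (Poly_Mapping.single b 1) w \<in> psi_ker"
      by (rule nsubspace_nlinear_image[OF nsubspace_psi_ker nlinear_ls_rel_poly(3)])
        (simp add: psi_ker_def psi_ls_instance_Tideal)
  qed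
qed

lemma Tideal_LS_A2_psi_ker: "p \<in> Tideal LS_A2_ids \<Longrightarrow> p \<in> psi_ker"
proof (induction rule: Tideal.induct)
  case (gen s \<sigma>)
  then obtain rel where "s = ls_rel_poly rel x0 x1 x2"
    unfolding LS_A2_ids_eq by blast
  then show ?case
    by (simp only: subst_ls_rel_poly ls_rel_poly_psi_ker)
qed (use nsubspace_psi_ker psi_ker_nmult in \<open>auto simp: nsubspace_def\<close>)

lemma psi_Tideal_LS_A2:
  assumes "p \<in> Tideal LS_A2_ids"
  shows "psi p \<in> Tideal Lie_ids"
proof -
  have "\<forall>C. psi (ctx_apply C p) \<in> Tideal Lie_ids"
    using Tideal_LS_A2_psi_ker[OF assms] by (simp add: psi_ker_def)
  then show ?thesis
    by (metis ctx_apply.simps(1))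
qed

lemma twelve_minus_psi_comm_Tideal:
  assumes "\<forall>t\<in>Poly_Mapping.keys f. mdeg t \<le> 4"
  shows "nsmult 12 f - psi (poly_eval ncomm nvar f) \<in> Tideal Lie_ids"
proof -
  have "nsmult 12 f = lin_ext (\<lambda>t. Poly_Mapping.single t 12) f"
    using nlinear_eq_lin_ext[OF nlinear_nsmult] by simp
  moreover have "psi (poly_eval ncomm nvar f) = lin_ext (\<lambda>t. psi (mon_eval ncomm nvar t)) f"
    by (simp add: poly_eval_lin_ext lin_ext_comp[OF nlinear_psi])
  ultimately have "nsmult 12 f - psi (poly_eval ncomm nvar f)
      = lin_ext (\<lambda>t. Poly_Mapping.single t 12 - psi (mon_eval ncomm nvar t)) f"
    by (simp add: lin_ext_fun_diff)
  also have "\<dots> \<in> Tideal Lie_ids"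
    using assms by (intro nsubspace_lin_ext[OF nsubspace_Tideal] comm_defect_Tideal) simp
  finally show ?thesis .
qed

theorem mainTheorem10:
  fixes f :: "'k::field_char_0 napoly"
  assumes "\<forall>t\<in>Poly_Mapping.keys f. mdeg t \<le> 4"
    and "is_comm_identity_of_free_LSA2 f"
  shows "f \<in> Tideal Lie_ids"
proof -
  let ?g = "poly_eval ncomm nvar f"
  have "psi ?g \<in> Tideal Lie_ids"
    using assms(2) psi_Tideal_LS_A2 unfolding is_comm_identity_of_free_LSA2_def by blast
  moreover have "nsmult 12 f - psi ?g \<in> Tideal Lie_ids"
    using assms(1) by (rule twelve_minus_psi_comm_Tideal)
  ultimately have "nsmult 12 f \<in> Tideal Lie_ids"
    using Tideal.add by fastforce
  then have "nsmult (1 / 12) (nsmult 12 f) \<in> Tideal Lie_ids"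
    by (rule Tideal.smult)
  then show ?thesis
    by simp
qed

end
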